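(* Let $X$ be a complex Banach space and $\{U_h\}\in C_b((0,1],B(X))$. Then $\{U_h\}$ is an asymptotic quasinilpotent operator, i.e. $\lim_{n\to\infty}\big(\limsup_{h\to0}\|U_h^n\|\big)^{1/n}=0$, if and only if $Sp(\{U_h\})=\{0\}$.
   Context: $B(X)$ is the algebra of bounded linear operators on $X$. $C_b((0,1],B(X))$ denotes the set of families $\{T_h\}_{h\in(0,1]}\subset B(X)$ with $\sup_h\|T_h\|<\infty$. The resolvent set of $\{U_h\}$ is $r(\{U_h\})=\{\lambda\in\mathbb{C}:\ \exists\{\mathcal{R}(\lambda,U_h)\}\in C_b((0,1],B(X))$ with $\lim_{h\to0}\|(\lambda I-U_h)\mathcal{R}(\lambda,U_h)-I\|=\lim_{h\to0}\|\mathcal{R}(\lambda,U_h)(\lambda I-U_h)-I\|=0\}$, and the spectrum is $Sp(\{U_h\})=\mathbb{C}\setminus r(\{U_h\})$. *)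

theory Defs
  imports "HOL-Analysis.Analysis"
begin

text \<open>HOL-Analysis has no complex vector spaces, so a complex normed space is a real
normed space with a compatible complex scalar multiplication.\<close>

class complex_normed_vector = real_normed_vector +
  fixes scaleC :: "complex \<Rightarrow> 'a \<Rightarrow> 'a" (infixr "*\<^sub>C" 75)
  assumes scaleC_add_right: "a *\<^sub>C (x + y) = a *\<^sub>C x + a *\<^sub>C y"
    and scaleC_add_left: "(a + b) *\<^sub>C x = a *\<^sub>C x + b *\<^sub>C x"
    and scaleC_scaleC: "a *\<^sub>C (b *\<^sub>C x) = (a * b) *\<^sub>C x"
    and scaleC_one: "1 *\<^sub>C x = x"
    and scaleR_scaleC: "r *\<^sub>R x = complex_of_real r *\<^sub>C x"
    and norm_scaleC: "norm (a *\<^sub>C x) = cmod a * norm x"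

class complex_banach = complex_normed_vector + banach

definition bop :: "('a::complex_normed_vector \<Rightarrow> 'a) \<Rightarrow> bool" where
  "bop T \<longleftrightarrow> bounded_linear T \<and> (\<forall>c x. T (c *\<^sub>C x) = c *\<^sub>C T x)"

text \<open>C_b((0,1],B(X)): families h \<mapsto> T h, h in (0,1], of operators in B(X) with
  sup_h norm (T h) < infinity (values for h outside (0,1] are irrelevant).\<close>
definition Cb :: "(real \<Rightarrow> 'a::complex_normed_vector \<Rightarrow> 'a) \<Rightarrow> bool" where
  "Cb T \<longleftrightarrow> (\<forall>h\<in>{0<..1}. bop (T h)) \<and> bdd_above ((\<lambda>h. onorm (T h)) ` {0<..1})"

definition asymp_resolvent_set :: "(real \<Rightarrow> 'a::complex_normed_vector \<Rightarrow> 'a) \<Rightarrow> complex set" where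
  "asymp_resolvent_set U = {l. \<exists>R. Cb R \<and>
     ((\<lambda>h. onorm (\<lambda>x. (l *\<^sub>C R h x - U h (R h x)) - x)) \<longlongrightarrow> 0) (at_right 0) \<and>
     ((\<lambda>h. onorm (\<lambda>x. R h (l *\<^sub>C x - U h x) - x)) \<longlongrightarrow> 0) (at_right 0)}"

definition asymp_spectrum :: "(real \<Rightarrow> 'a::complex_normed_vector \<Rightarrow> 'a) \<Rightarrow> complex set" where
  "asymp_spectrum U = UNIV - asymp_resolvent_set U"

definition asymp_quasinilpotent :: "(real \<Rightarrow> 'a::complex_normed_vector \<Rightarrow> 'a) \<Rightarrow> bool" where
  "asymp_quasinilpotent U \<longleftrightarrow>
     (\<lambda>n. root n (real_of_ereal (Limsup (at_right 0) (\<lambda>h. ereal (onorm (U h ^^ n))))))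
       \<longlonglongrightarrow> 0"

end

theory Submission
  imports Defs
begin

text \<open>Write \<open>\<parallel>F\<parallel>\<close> for \<open>lim sup\<^sub>h\<^sub>\<rightarrow>\<^sub>0 \<parallel>F\<^sub>h\<parallel>\<close>; on bounded families this is a submultiplicative seminorm.

  If \<open>\<parallel>U\<^sup>n\<parallel>\<^sup>1\<^sup>/\<^sup>n \<rightarrow> 0\<close>, then for \<open>\<lambda> \<noteq> 0\<close> the truncated Neumann series
  \<open>\<Sum>\<^sub>s\<^sub><\<^sub>K \<lambda>\<^sup>-\<^sup>s\<^sup>-\<^sup>1 U\<^sub>h\<^sup>s\<close> with \<open>K \<approx> N/h\<close> terms is an asymptotic inverse of \<open>\<lambda> - U\<^sub>h\<close>:
  once \<open>\<parallel>U\<^sup>N\<parallel> < (|\<lambda>|/2)\<^sup>N\<close>, the remainder \<open>\<lambda>\<^sup>-\<^sup>K U\<^sub>h\<^sup>K\<close> is of size \<open>2\<^sup>-\<^sup>1\<^sup>/\<^sup>h\<close>. And \<open>0\<close> is in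
  the spectrum, because an asymptotic inverse \<open>R\<close> of \<open>-U\<close> would force \<open>\<parallel>U\<^sup>k\<parallel> \<ge> (2\<parallel>R\<parallel>)\<^sup>-\<^sup>k\<close>.

  Conversely, suppose every \<open>\<lambda> \<noteq> 0\<close> has an asymptotic resolvent \<open>R(\<lambda>)\<close>. The resolvent
  identity holds up to families of seminorm \<open>0\<close>, so \<open>\<parallel>R(\<lambda>)\<parallel>\<close> is locally bounded, hence
  bounded on every annulus \<open>\<rho> \<le> |\<lambda>| \<le> \<rho>'\<close>. Sum \<open>R\<close> over the \<open>2n\<close> points \<open>r e\<^sup>i\<^sup>\<pi>\<^sup>j\<^sup>/\<^sup>n\<close>
  with the weights of a Riemann sum for the Cauchy integral of \<open>\<lambda>\<^sup>n R(\<lambda>)\<close>. Pairing neighbouring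
  points bounds this sum by a constant independent of \<open>n\<close>, while orthogonality of the roots of
  unity shows that, applied to \<open>r\<^sup>2\<^sup>n - U\<^sup>2\<^sup>n\<close>, it gives \<open>2n r\<^sup>n\<^sup>-\<^sup>1 U\<^sup>n\<close> up to vanishing
  defects. For \<open>r = \<parallel>U\<^sup>n\<parallel>\<^sup>1\<^sup>/\<^sup>n \<ge> \<rho>\<close> this yields \<open>n \<le> C r\<close>, impossible for large \<open>n\<close>.\<close>

section \<open>Complex scalar multiplication and bounded operators\<close>

lemma scaleC_zero_right [simp]: "c *\<^sub>C (0::'a::complex_normed_vector) = 0"
  using scaleC_add_right[of c "0::'a" 0] by simp

lemma scaleC_zero_left [simp]: "(0::complex) *\<^sub>C (x::'a::complex_normed_vector) = 0"
  using scaleR_scaleC[of 0 x] by simp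

lemma scaleC_minus_right: "c *\<^sub>C (- x) = - (c *\<^sub>C (x::'a::complex_normed_vector))"
  using scaleC_add_right[of c "-x" x] by (simp add: eq_neg_iff_add_eq_0)

lemma scaleC_diff_right: "c *\<^sub>C (x - y) = c *\<^sub>C x - c *\<^sub>C (y::'a::complex_normed_vector)"
  unfolding diff_conv_add_uminus by (simp only: scaleC_add_right scaleC_minus_right)

lemma scaleC_minus_left: "(- c) *\<^sub>C x = - (c *\<^sub>C (x::'a::complex_normed_vector))"
  using scaleC_add_left[of "-c" c x] by (simp add: eq_neg_iff_add_eq_0)

lemma scaleC_diff_left: "(c - d) *\<^sub>C x = c *\<^sub>C x - d *\<^sub>C (x::'a::complex_normed_vector)"
  unfolding diff_conv_add_uminus by (simp only: scaleC_add_left scaleC_minus_left)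

lemma scaleC_sum_right: "c *\<^sub>C (\<Sum>i\<in>A. f i) = (\<Sum>i\<in>A. c *\<^sub>C (f i::'a::complex_normed_vector))"
  by (induction A rule: infinite_finite_induct) (simp_all add: scaleC_add_right)

lemma scaleC_sum_left: "(\<Sum>i\<in>A. f i) *\<^sub>C x = (\<Sum>i\<in>A. f i *\<^sub>C (x::'a::complex_normed_vector))"
  by (induction A rule: infinite_finite_induct) (simp_all add: scaleC_add_left)

lemma scaleC_left_commute: "c *\<^sub>C (d *\<^sub>C x) = d *\<^sub>C (c *\<^sub>C (x::'a::complex_normed_vector))"
  by (simp add: scaleC_scaleC mult.commute)

lemma bounded_linear_scaleC: "bounded_linear (\<lambda>x::'a::complex_normed_vector. c *\<^sub>C x)"
proof (rule bounded_linear_intro[where K="cmod c"])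
  fix x y :: 'a show "c *\<^sub>C (x + y) = c *\<^sub>C x + c *\<^sub>C y" by (rule scaleC_add_right)
next
  fix r and x :: 'a show "c *\<^sub>C (r *\<^sub>R x) = r *\<^sub>R (c *\<^sub>C x)"
    by (simp add: scaleR_scaleC scaleC_left_commute)
next
  fix x :: 'a show "norm (c *\<^sub>C x) \<le> norm x * cmod c" by (simp add: norm_scaleC)
qed

lemma bop_bounded_linear: "bop T \<Longrightarrow> bounded_linear T"
  by (simp add: bop_def)

lemma bop_apply_scaleC: "bop T \<Longrightarrow> T (c *\<^sub>C x) = c *\<^sub>C T x"
  by (simp add: bop_def)

lemma bop_apply_add: "bop T \<Longrightarrow> T (x + y) = T x + T y"
  using bop_bounded_linear bounded_linear.linear linear_add by blast

lemma bop_apply_diff: "bop T \<Longrightarrow> T (x - y) = T x - T y"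
  using bop_bounded_linear bounded_linear.linear linear_diff by blast

lemma bop_apply_0: "bop T \<Longrightarrow> T 0 = 0"
  using bop_bounded_linear bounded_linear.linear linear_0 by blast

lemma bop_apply_sum: "bop T \<Longrightarrow> T (\<Sum>i\<in>A. f i) = (\<Sum>i\<in>A. T (f i))"
  by (induction A rule: infinite_finite_induct) (simp_all add: bop_apply_0 bop_apply_add)

lemma bop_id: "bop (\<lambda>x. x)"
  by (simp add: bop_def bounded_linear_ident)

lemma bop_zero: "bop (\<lambda>x. 0)"
  by (simp add: bop_def bounded_linear_zero)

lemma bop_compose: "bop S \<Longrightarrow> bop T \<Longrightarrow> bop (\<lambda>x. S (T x))"
  unfolding bop_def using bounded_linear_compose[of S T] by (auto simp: o_def)

lemma bop_add: "bop S \<Longrightarrow> bop T \<Longrightarrow> bop (\<lambda>x. S x + T x)"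
  unfolding bop_def by (auto intro: bounded_linear_add simp: scaleC_add_right)

lemma bop_diff: "bop S \<Longrightarrow> bop T \<Longrightarrow> bop (\<lambda>x. S x - T x)"
  unfolding bop_def by (auto intro: bounded_linear_sub simp: scaleC_diff_right)

lemma bop_scaleC: "bop T \<Longrightarrow> bop (\<lambda>x. c *\<^sub>C T x)"
  unfolding bop_def using bounded_linear_compose[OF bounded_linear_scaleC[of c], of T]
  by (auto simp: o_def scaleC_left_commute)

lemma bop_sum: "(\<And>i. i \<in> A \<Longrightarrow> bop (T i)) \<Longrightarrow> bop (\<lambda>x. \<Sum>i\<in>A. T i x)"
  by (induction A rule: infinite_finite_induct) (simp_all add: bop_zero bop_add)

lemma bop_funpow: "bop T \<Longrightarrow> bop (T ^^ n)"
  by (induction n) (simp_all add: bop_id[unfolded id_def[symmetric]] bop_compose[unfolded o_def[symmetric]])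

lemma onorm_compose_le:
  "bounded_linear f \<Longrightarrow> bounded_linear g \<Longrightarrow> onorm (\<lambda>x. f (g x)) \<le> onorm f * onorm g"
  using onorm_compose[of f g] by (simp add: o_def)

lemma onorm_diff_le:
  "bounded_linear f \<Longrightarrow> bounded_linear g \<Longrightarrow> onorm (\<lambda>x. f x - g x) \<le> onorm f + onorm g"
  using onorm_triangle[of f "\<lambda>x. - g x"] onorm_neg[of g] bounded_linear_minus[of g] by simp

lemma onorm_scaleC_le: "bounded_linear T \<Longrightarrow> onorm (\<lambda>x. c *\<^sub>C T x) \<le> cmod c * onorm T"
  by (rule onorm_bound) (auto simp: onorm_pos_le norm_scaleC mult.assoc intro: mult_left_mono onorm)

lemma onorm_funpow_le: "bop T \<Longrightarrow> onorm (T ^^ n) \<le> onorm T ^ n"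
proof (induction n)
  case 0 then show ?case using onorm_id_le by (simp add: id_def)
next
  case (Suc n)
  have "onorm (T ^^ Suc n) \<le> onorm T * onorm (T ^^ n)"
    using onorm_compose_le[OF bop_bounded_linear bop_bounded_linear[OF bop_funpow]] Suc.prems
    by (simp add: o_def)
  also have "\<dots> \<le> onorm T * onorm T ^ n"
    using Suc onorm_pos_le[OF bop_bounded_linear[OF Suc.prems]] by (simp add: mult_left_mono)
  finally show ?case by (simp add: o_def)
qed

section \<open>The asymptotic operator seminorm\<close>

definition asymp_bounded :: "(real \<Rightarrow> 'a::complex_normed_vector \<Rightarrow> 'a) \<Rightarrow> bool" where
  "asymp_bounded F \<longleftrightarrow> (\<exists>c. \<forall>\<^sub>F h in at_right 0. bop (F h) \<and> onorm (F h) \<le> c)"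

definition asymp_norm :: "(real \<Rightarrow> 'a::complex_normed_vector \<Rightarrow> 'a) \<Rightarrow> real" where
  "asymp_norm F = real_of_ereal (Limsup (at_right 0) (\<lambda>h. ereal (onorm (F h))))"

lemma asymp_quasinilpotent_iff:
  "asymp_quasinilpotent U \<longleftrightarrow> (\<lambda>n. root n (asymp_norm (\<lambda>h. U h ^^ n))) \<longlonglongrightarrow> 0"
  by (simp add: asymp_quasinilpotent_def asymp_norm_def)

lemma eventually_in_unit_interval: "\<forall>\<^sub>F h in at_right 0. h \<in> {0<..1::real}"
  by (rule eventually_at_rightI[where b=1]) auto

lemma asymp_bounded_bop:
  assumes "asymp_bounded F"
  shows "\<forall>\<^sub>F h in at_right 0. bop (F h)"
proof -
  from assms obtain c where "\<forall>\<^sub>F h in at_right 0. bop (F h) \<and> onorm (F h) \<le> c"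
    by (auto simp: asymp_bounded_def)
  then show ?thesis by (rule eventually_mono) simp
qed

lemma CbE:
  assumes "Cb R"
  obtains M where "0 < M" "\<And>h. h \<in> {0<..1} \<Longrightarrow> bop (R h) \<and> onorm (R h) \<le> M"
proof -
  from assms obtain B where "\<forall>h\<in>{0<..1}. onorm (R h) \<le> B"
    unfolding Cb_def bdd_above_def by auto
  with assms show ?thesis by (intro that[of "max B 1"]) (auto simp: Cb_def le_max_iff_disj)
qed

lemma Cb_asymp_bounded:
  assumes "Cb R"
  shows "asymp_bounded R"
proof -
  obtain M where M: "\<And>h. h \<in> {0<..1} \<Longrightarrow> bop (R h) \<and> onorm (R h) \<le> M"
    using CbE[OF assms] by blast
  have "\<forall>\<^sub>F h in at_right 0. bop (R h) \<and> onorm (R h) \<le> M"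
    by (rule eventually_mono[OF eventually_in_unit_interval M])
  then show ?thesis unfolding asymp_bounded_def by blast
qed

lemma Limsup_onorm_eq_asymp_norm:
  assumes "asymp_bounded F"
  shows "Limsup (at_right 0) (\<lambda>h. ereal (onorm (F h))) = ereal (asymp_norm F)"
    and "0 \<le> asymp_norm F"
proof -
  from assms obtain c where ev: "\<forall>\<^sub>F h in at_right 0. bop (F h) \<and> onorm (F h) \<le> c"
    by (auto simp: asymp_bounded_def)
  define L where "L = Limsup (at_right (0::real)) (\<lambda>h. ereal (onorm (F h)))"
  have "L \<le> ereal c" unfolding L_def
    by (rule Limsup_bounded, rule eventually_mono[OF ev]) simp
  moreover have "0 \<le> L" unfolding L_def
    by (rule le_Limsup, simp, rule eventually_mono[OF ev]) (simp add: onorm_pos_le bop_bounded_linear)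
  ultimately have "L = ereal (real_of_ereal L)" "0 \<le> real_of_ereal L"
    by (cases L; auto)+
  then show "Limsup (at_right 0) (\<lambda>h. ereal (onorm (F h))) = ereal (asymp_norm F)" "0 \<le> asymp_norm F"
    by (simp_all add: asymp_norm_def L_def[symmetric])
qed

lemmas asymp_norm_nonneg = Limsup_onorm_eq_asymp_norm(2)

lemma asymp_norm_le:
  assumes "asymp_bounded F" "\<forall>\<^sub>F h in at_right 0. onorm (F h) \<le> c"
  shows "asymp_norm F \<le> c"
proof -
  have "Limsup (at_right 0) (\<lambda>h. ereal (onorm (F h))) \<le> ereal c"
    by (rule Limsup_bounded, rule eventually_mono[OF assms(2)]) simp
  then show ?thesis using Limsup_onorm_eq_asymp_norm(1)[OF assms(1)] by simp
qed

lemma asymp_norm_ge: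
  assumes "asymp_bounded F" "\<forall>\<^sub>F h in at_right 0. c \<le> onorm (F h)"
  shows "c \<le> asymp_norm F"
proof -
  have "ereal c \<le> Limsup (at_right 0) (\<lambda>h. ereal (onorm (F h)))"
    by (rule le_Limsup, simp, rule eventually_mono[OF assms(2)]) simp
  then show ?thesis using Limsup_onorm_eq_asymp_norm(1)[OF assms(1)] by simp
qed

lemma eventually_onorm_less_asymp_norm:
  assumes "asymp_bounded F" "0 < e"
  shows "\<forall>\<^sub>F h in at_right 0. onorm (F h) < asymp_norm F + e"
proof -
  have "Limsup (at_right 0) (\<lambda>h. ereal (onorm (F h))) < ereal (asymp_norm F + e)"
    using Limsup_onorm_eq_asymp_norm(1)[OF assms(1)] assms(2) by simp
  from Limsup_lessD[OF this] show ?thesis by (rule eventually_mono) simp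
qed

lemma asymp_norm_le_epsilon:
  assumes "asymp_bounded F" "\<And>e. 0 < e \<Longrightarrow> \<forall>\<^sub>F h in at_right 0. onorm (F h) \<le> c + e"
  shows "asymp_norm F \<le> c"
  using asymp_norm_le[OF assms(1) assms(2)] by (rule field_le_epsilon)

lemma asymp_norm_eq_0:
  assumes "asymp_bounded F" "((\<lambda>h. onorm (F h)) \<longlongrightarrow> 0) (at_right 0)"
  shows "asymp_norm F = 0"
proof -
  have "asymp_norm F \<le> 0"
  proof (rule asymp_norm_le_epsilon[OF assms(1)])
    fix e :: real assume "0 < e"
    from order_tendstoD(2)[OF assms(2) this] show "\<forall>\<^sub>F h in at_right 0. onorm (F h) \<le> 0 + e"
      by (rule eventually_mono) simp
  qed
  with asymp_norm_nonneg[OF assms(1)] show ?thesis by simp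
qed

lemma asymp_norm_cong:
  assumes "\<forall>\<^sub>F h in at_right 0. F h = G h"
  shows "asymp_norm F = asymp_norm G"
  unfolding asymp_norm_def
  by (rule arg_cong[where f=real_of_ereal], rule Limsup_eq, rule eventually_mono[OF assms]) simp

lemma asymp_bounded_id: "asymp_bounded (\<lambda>h x. x)"
  unfolding asymp_bounded_def by (auto intro!: exI[of _ 1] simp: bop_id onorm_id_le)

lemma asymp_bounded_zero: "asymp_bounded (\<lambda>h x. 0)"
  unfolding asymp_bounded_def by (auto intro!: exI[of _ 0] simp: bop_zero onorm_zero)

lemma asymp_bounded_add:
  assumes "asymp_bounded F" "asymp_bounded G"
  shows "asymp_bounded (\<lambda>h x. F h x + G h x)"
proof -
  from assms obtain c d where "\<forall>\<^sub>F h in at_right 0. bop (F h) \<and> onorm (F h) \<le> c"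
    and "\<forall>\<^sub>F h in at_right 0. bop (G h) \<and> onorm (G h) \<le> d"
    by (auto simp: asymp_bounded_def)
  then have "\<forall>\<^sub>F h in at_right 0. bop (\<lambda>x. F h x + G h x) \<and> onorm (\<lambda>x. F h x + G h x) \<le> c + d"
    by eventually_elim (auto intro!: bop_add onorm_triangle_le add_mono bop_bounded_linear)
  then show ?thesis unfolding asymp_bounded_def by blast
qed

lemma asymp_bounded_diff:
  assumes "asymp_bounded F" "asymp_bounded G"
  shows "asymp_bounded (\<lambda>h x. F h x - G h x)"
proof -
  from assms obtain c d where "\<forall>\<^sub>F h in at_right 0. bop (F h) \<and> onorm (F h) \<le> c"
    and "\<forall>\<^sub>F h in at_right 0. bop (G h) \<and> onorm (G h) \<le> d"
    by (auto simp: asymp_bounded_def)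
  then have "\<forall>\<^sub>F h in at_right 0. bop (\<lambda>x. F h x - G h x) \<and> onorm (\<lambda>x. F h x - G h x) \<le> c + d"
    by eventually_elim (auto intro!: bop_diff order_trans[OF onorm_diff_le add_mono] bop_bounded_linear)
  then show ?thesis unfolding asymp_bounded_def by blast
qed

lemma asymp_bounded_compose:
  assumes "asymp_bounded F" "asymp_bounded G"
  shows "asymp_bounded (\<lambda>h x. F h (G h x))"
proof -
  from assms obtain c d where "\<forall>\<^sub>F h in at_right 0. bop (F h) \<and> onorm (F h) \<le> c"
    and "\<forall>\<^sub>F h in at_right 0. bop (G h) \<and> onorm (G h) \<le> d"
    by (auto simp: asymp_bounded_def)
  then have "\<forall>\<^sub>F h in at_right 0. bop (\<lambda>x. F h (G h x)) \<and> onorm (\<lambda>x. F h (G h x)) \<le> c * d"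
  proof eventually_elim
    case (elim h)
    have "onorm (\<lambda>x. F h (G h x)) \<le> onorm (F h) * onorm (G h)"
      using elim by (intro onorm_compose_le bop_bounded_linear) auto
    also have "\<dots> \<le> c * d"
      using elim by (intro mult_mono onorm_pos_le bop_bounded_linear)
        (auto intro: order_trans[OF onorm_pos_le[OF bop_bounded_linear]])
    finally show ?case using elim by (simp add: bop_compose)
  qed
  then show ?thesis unfolding asymp_bounded_def by blast
qed

lemma asymp_bounded_scaleC:
  assumes "asymp_bounded F"
  shows "asymp_bounded (\<lambda>h x. a *\<^sub>C F h x)"
proof -
  from assms obtain c where "\<forall>\<^sub>F h in at_right 0. bop (F h) \<and> onorm (F h) \<le> c"
    by (auto simp: asymp_bounded_def)
  then have "\<forall>\<^sub>F h in at_right 0. bop (\<lambda>x. a *\<^sub>C F h x) \<and> onorm (\<lambda>x. a *\<^sub>C F h x) \<le> cmod a * c"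
    by eventually_elim
      (auto intro!: bop_scaleC order_trans[OF onorm_scaleC_le] mult_left_mono bop_bounded_linear)
  then show ?thesis unfolding asymp_bounded_def by blast
qed

lemma asymp_bounded_sum:
  "(\<And>i. i \<in> A \<Longrightarrow> asymp_bounded (G i)) \<Longrightarrow> asymp_bounded (\<lambda>h x. \<Sum>i\<in>A. G i h x)"
proof (induction A rule: infinite_finite_induct)
  case (insert a A)
  then show ?case using asymp_bounded_add[of "G a" "\<lambda>h x. \<Sum>i\<in>A. G i h x"] by simp
qed (simp_all add: asymp_bounded_zero)

lemma asymp_bounded_funpow:
  assumes "asymp_bounded F"
  shows "asymp_bounded (\<lambda>h. F h ^^ n)"
proof -
  from assms obtain c where "\<forall>\<^sub>F h in at_right 0. bop (F h) \<and> onorm (F h) \<le> c"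
    by (auto simp: asymp_bounded_def)
  then have "\<forall>\<^sub>F h in at_right 0. bop (F h ^^ n) \<and> onorm (F h ^^ n) \<le> c ^ n"
    by eventually_elim
      (auto intro!: bop_funpow order_trans[OF onorm_funpow_le] power_mono onorm_pos_le bop_bounded_linear)
  then show ?thesis unfolding asymp_bounded_def by blast
qed

lemma asymp_norm_add_le:
  assumes "asymp_bounded F" "asymp_bounded G" "asymp_bounded H"
    and "\<forall>\<^sub>F h in at_right 0. onorm (F h) \<le> onorm (G h) + onorm (H h)"
  shows "asymp_norm F \<le> asymp_norm G + asymp_norm H"
proof (rule asymp_norm_le_epsilon[OF assms(1)])
  fix e :: real assume "0 < e"
  then have "0 < e/2" by simp
  from eventually_onorm_less_asymp_norm[OF assms(2) this] eventually_onorm_less_asymp_norm[OF assms(3) this] assms(4)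
  show "\<forall>\<^sub>F h in at_right 0. onorm (F h) \<le> asymp_norm G + asymp_norm H + e"
    by eventually_elim auto
qed

lemma asymp_norm_add:
  assumes "asymp_bounded F" "asymp_bounded G"
  shows "asymp_norm (\<lambda>h x. F h x + G h x) \<le> asymp_norm F + asymp_norm G"
proof (rule asymp_norm_add_le[OF asymp_bounded_add[OF assms] assms])
  from asymp_bounded_bop[OF assms(1)] asymp_bounded_bop[OF assms(2)]
  show "\<forall>\<^sub>F h in at_right 0. onorm (\<lambda>x. F h x + G h x) \<le> onorm (F h) + onorm (G h)"
    by eventually_elim (intro onorm_triangle bop_bounded_linear)
qed

lemma asymp_norm_diff:
  assumes "asymp_bounded F" "asymp_bounded G"
  shows "asymp_norm (\<lambda>h x. F h x - G h x) \<le> asymp_norm F + asymp_norm G"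
proof (rule asymp_norm_add_le[OF asymp_bounded_diff[OF assms] assms])
  from asymp_bounded_bop[OF assms(1)] asymp_bounded_bop[OF assms(2)]
  show "\<forall>\<^sub>F h in at_right 0. onorm (\<lambda>x. F h x - G h x) \<le> onorm (F h) + onorm (G h)"
    by eventually_elim (intro onorm_diff_le bop_bounded_linear)
qed

lemma asymp_norm_compose:
  assumes F: "asymp_bounded F" and G: "asymp_bounded G"
  shows "asymp_norm (\<lambda>h x. F h (G h x)) \<le> asymp_norm F * asymp_norm G"
proof (rule asymp_norm_le_epsilon[OF asymp_bounded_compose[OF F G]])
  fix e :: real assume e: "0 < e"
  define a b where "a = asymp_norm F" and "b = asymp_norm G"
  have ab: "0 \<le> a" "0 \<le> b" using asymp_norm_nonneg F G by (auto simp: a_def b_def)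
  define d where "d = min 1 (e / (a + b + 1))"
  have d: "0 < d" "d \<le> 1" using e ab by (simp_all add: d_def)
  have "d * (a + b + 1) \<le> e / (a + b + 1) * (a + b + 1)"
    using ab by (intro mult_right_mono) (simp_all add: d_def)
  then have de: "d * (a + b + 1) \<le> e" using ab by simp
  from eventually_onorm_less_asymp_norm[OF F d(1)] eventually_onorm_less_asymp_norm[OF G d(1)]
    asymp_bounded_bop[OF F] asymp_bounded_bop[OF G]
  show "\<forall>\<^sub>F h in at_right 0. onorm (\<lambda>x. F h (G h x)) \<le> a * b + e"
  proof eventually_elim
    case (elim h)
    have "onorm (\<lambda>x. F h (G h x)) \<le> onorm (F h) * onorm (G h)"
      using elim by (intro onorm_compose_le bop_bounded_linear)
    also have "\<dots> \<le> (a + d) * (b + d)"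
      using elim ab d by (intro mult_mono onorm_pos_le bop_bounded_linear) (auto simp: a_def b_def)
    also have "\<dots> = a * b + d * (a + b + d)" by (simp add: algebra_simps)
    also have "\<dots> \<le> a * b + d * (a + b + 1)"
      using d ab by (intro add_left_mono mult_left_mono) simp_all
    also have "\<dots> \<le> a * b + e" using de by simp
    finally show ?case .
  qed
qed

lemma asymp_norm_scaleC:
  assumes F: "asymp_bounded F"
  shows "asymp_norm (\<lambda>h x. a *\<^sub>C F h x) \<le> cmod a * asymp_norm F"
proof (rule asymp_norm_le_epsilon[OF asymp_bounded_scaleC[OF F]])
  fix e :: real assume e: "0 < e"
  define d where "d = e / (cmod a + 1)"
  have pos: "0 < cmod a + 1" by (simp add: add_nonneg_pos)
  then have d0: "0 < d" using e by (simp add: d_def)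
  have "cmod a * d \<le> (cmod a + 1) * d" using d0 by (intro mult_right_mono) simp_all
  also have "\<dots> = e" using pos by (simp add: d_def)
  finally have d: "0 < d" "cmod a * d \<le> e" using d0 by simp_all
  from eventually_onorm_less_asymp_norm[OF F d(1)] asymp_bounded_bop[OF F]
  show "\<forall>\<^sub>F h in at_right 0. onorm (\<lambda>x. a *\<^sub>C F h x) \<le> cmod a * asymp_norm F + e"
  proof eventually_elim
    case (elim h)
    have "onorm (\<lambda>x. a *\<^sub>C F h x) \<le> cmod a * onorm (F h)"
      using elim by (intro onorm_scaleC_le bop_bounded_linear)
    also have "\<dots> \<le> cmod a * (asymp_norm F + d)" using elim by (intro mult_left_mono) auto
    finally show ?case using d by (simp add: distrib_left)
  qed
qed

lemma asymp_norm_scaleC_eq: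
  assumes F: "asymp_bounded F" and a: "a \<noteq> 0"
  shows "asymp_norm (\<lambda>h x. a *\<^sub>C F h x) = cmod a * asymp_norm F"
proof (rule antisym[OF asymp_norm_scaleC[OF F]])
  have "asymp_norm F = asymp_norm (\<lambda>h x. inverse a *\<^sub>C (a *\<^sub>C F h x))"
    using a by (simp add: scaleC_scaleC scaleC_one)
  also have "\<dots> \<le> cmod (inverse a) * asymp_norm (\<lambda>h x. a *\<^sub>C F h x)"
    by (rule asymp_norm_scaleC[OF asymp_bounded_scaleC[OF F]])
  finally have "cmod a * asymp_norm F
      \<le> cmod a * (cmod (inverse a) * asymp_norm (\<lambda>h x. a *\<^sub>C F h x))"
    by (rule mult_left_mono) simp
  also have "\<dots> = asymp_norm (\<lambda>h x. a *\<^sub>C F h x)" using a by (simp add: norm_inverse)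
  finally show "cmod a * asymp_norm F \<le> asymp_norm (\<lambda>h x. a *\<^sub>C F h x)" .
qed

lemma asymp_norm_sum:
  assumes A: "finite A" and G: "\<And>i. i \<in> A \<Longrightarrow> asymp_bounded (G i)"
  shows "asymp_norm (\<lambda>h x. \<Sum>i\<in>A. G i h x) \<le> (\<Sum>i\<in>A. asymp_norm (G i))"
proof (rule asymp_norm_le_epsilon[OF asymp_bounded_sum[OF G]])
  fix e :: real assume e: "0 < e"
  define d where "d = e / (real (card A) + 1)"
  have d: "0 < d" "real (card A) * d \<le> e" using e by (auto simp: d_def field_simps)
  have "\<forall>\<^sub>F h in at_right 0. \<forall>i\<in>A. bop (G i h) \<and> onorm (G i h) < asymp_norm (G i) + d"
    using A
  proof (rule eventually_ball_finite, intro ballI eventually_conj)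
    fix i assume "i \<in> A"
    with G show "\<forall>\<^sub>F h in at_right 0. bop (G i h)"
      and "\<forall>\<^sub>F h in at_right 0. onorm (G i h) < asymp_norm (G i) + d"
      by (simp_all add: asymp_bounded_bop eventually_onorm_less_asymp_norm d(1))
  qed
  then show "\<forall>\<^sub>F h in at_right 0. onorm (\<lambda>x. \<Sum>i\<in>A. G i h x) \<le> (\<Sum>i\<in>A. asymp_norm (G i)) + e"
  proof eventually_elim
    case (elim h)
    have "onorm (\<lambda>x. \<Sum>i\<in>A. G i h x) \<le> (\<Sum>i\<in>A. onorm (G i h))"
      using elim A by (intro onorm_sum) (auto intro: bop_bounded_linear)
    also have "\<dots> \<le> (\<Sum>i\<in>A. asymp_norm (G i) + d)" using elim by (intro sum_mono) auto
    also have "\<dots> \<le> (\<Sum>i\<in>A. asymp_norm (G i)) + e" using d by (simp add: sum.distrib)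
    finally show ?case .
  qed
qed

lemma asymp_norm_id: "asymp_norm (\<lambda>h x. x) \<le> 1"
  by (rule asymp_norm_le[OF asymp_bounded_id]) (simp add: onorm_id_le)

lemma asymp_norm_funpow_add:
  assumes "asymp_bounded F"
  shows "asymp_norm (\<lambda>h. F h ^^ (m + n)) \<le> asymp_norm (\<lambda>h. F h ^^ m) * asymp_norm (\<lambda>h. F h ^^ n)"
  using asymp_norm_compose[OF asymp_bounded_funpow[OF assms] asymp_bounded_funpow[OF assms], of m n]
  by (simp add: funpow_add o_def)

lemma asymp_norm_funpow:
  assumes "asymp_bounded F"
  shows "asymp_norm (\<lambda>h. F h ^^ n) \<le> asymp_norm F ^ n"
proof (induction n)
  case 0
  then show ?case using asymp_norm_id by (simp add: id_def)
next
  case (Suc n)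
  have "asymp_norm (\<lambda>h. F h ^^ Suc n) \<le> asymp_norm F * asymp_norm (\<lambda>h. F h ^^ n)"
    using asymp_norm_funpow_add[OF assms, of 1 n] by simp
  also have "\<dots> \<le> asymp_norm F * asymp_norm F ^ n"
    using Suc.IH asymp_norm_nonneg[OF assms] by (rule mult_left_mono)
  finally show ?case by (simp add: o_def)
qed

lemma root_asymp_norm_funpow_le:
  assumes "asymp_bounded F" "1 \<le> n"
  shows "root n (asymp_norm (\<lambda>h. F h ^^ n)) \<le> asymp_norm F"
proof -
  have "root n (asymp_norm (\<lambda>h. F h ^^ n)) \<le> root n (asymp_norm F ^ n)"
    using assms by (intro real_root_le_mono asymp_norm_funpow) simp_all
  also have "\<dots> = asymp_norm F"
    using assms asymp_norm_nonneg[OF assms(1)] by (simp add: real_root_power_cancel)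
  finally show ?thesis .
qed

lemma asymp_norm_scaleC_id_diff:
  assumes "asymp_bounded F"
  shows "asymp_norm (\<lambda>h x. a *\<^sub>C x - F h x) \<le> cmod a + asymp_norm F"
proof -
  have "asymp_norm (\<lambda>h (x::'a). a *\<^sub>C x) \<le> cmod a"
    using order_trans[OF asymp_norm_scaleC[OF asymp_bounded_id] mult_left_mono[OF asymp_norm_id norm_ge_zero]]
    by simp
  then show ?thesis
    using asymp_norm_diff[OF asymp_bounded_scaleC[OF asymp_bounded_id] assms, of a] by linarith
qed

section \<open>Quasinilpotent families have spectrum \<open>{0}\<close>\<close>

lemma ex_asymp_norm_funpow_less:
  assumes "asymp_bounded U" "asymp_quasinilpotent U" "0 < c"
  obtains N where "1 \<le> N" "asymp_norm (\<lambda>h. U h ^^ N) < c ^ N"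
proof -
  have "\<forall>\<^sub>F n in sequentially. root n (asymp_norm (\<lambda>h. U h ^^ n)) < c"
    using assms(2,3) unfolding asymp_quasinilpotent_iff by (rule order_tendstoD)
  then obtain N0 where N0: "\<And>n. N0 \<le> n \<Longrightarrow> root n (asymp_norm (\<lambda>h. U h ^^ n)) < c"
    by (auto simp: eventually_sequentially)
  define N where "N = Suc N0"
  define p where "p = asymp_norm (\<lambda>h. U h ^^ N)"
  have p0: "0 \<le> p" unfolding p_def by (rule asymp_norm_nonneg[OF asymp_bounded_funpow[OF assms(1)]])
  have "p = root N p ^ N" by (rule real_root_pow_pos2[symmetric]) (simp_all add: N_def p0)
  also have "\<dots> < c ^ N"
    using N0[of N] real_root_ge_zero[OF p0] by (intro power_strict_mono) (simp_all add: N_def p_def)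
  finally show ?thesis using that[of N] by (simp add: N_def p_def)
qed

lemma eventually_onorm_funpow_le_half_power:
  assumes "asymp_bounded U" "asymp_quasinilpotent U" "0 < t"
  obtains N where "\<forall>\<^sub>F h in at_right 0. onorm (U h ^^ N) \<le> t ^ N / 2"
proof -
  obtain N where N: "1 \<le> N" "asymp_norm (\<lambda>h. U h ^^ N) < (t/2) ^ N"
    using ex_asymp_norm_funpow_less[OF assms(1,2), of "t/2"] assms(3) by auto
  have "(2::real) ^ 1 \<le> 2 ^ N" using N(1) by (intro power_increasing) simp_all
  then have "t ^ N / 2 ^ N \<le> t ^ N / 2" using assms(3) by (intro divide_left_mono) simp_all
  then have "(t/2) ^ N \<le> t ^ N / 2" by (simp add: power_divide)
  with N(2) have "0 < t ^ N / 2 - asymp_norm (\<lambda>h. U h ^^ N)" by linarith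
  from eventually_onorm_less_asymp_norm[OF asymp_bounded_funpow[OF assms(1), of N] this]
  have "\<forall>\<^sub>F h in at_right 0. onorm (U h ^^ N) \<le> t ^ N / 2"
    by (rule eventually_mono) simp
  then show ?thesis by (rule that)
qed

lemma norm_le_funpow_of_left_inverse:
  fixes A R :: "'a::real_normed_vector \<Rightarrow> 'a"
  assumes A: "bounded_linear A" and R: "bounded_linear R"
    and E: "onorm (\<lambda>x. R (- A x) - x) \<le> 1/2"
  shows "norm x \<le> (2 * onorm R) ^ k * norm ((A ^^ k) x)"
proof -
  have bE: "bounded_linear (\<lambda>x. R (- A x) - x)"
    using bounded_linear_compose[OF R bounded_linear_minus[OF A]]
    by (intro bounded_linear_sub bounded_linear_ident) (simp add: o_def)
  have step: "norm y \<le> 2 * onorm R * norm (A y)" for y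
  proof -
    have "norm y \<le> norm (R (- A y)) + norm (R (- A y) - y)"
      using norm_triangle_ineq4[of "R (- A y)" "R (- A y) - y"] by simp
    also have "\<dots> \<le> onorm R * norm (A y) + 1/2 * norm y"
      using onorm[OF R, of "- A y"] order_trans[OF onorm[OF bE, of y] mult_right_mono[OF E norm_ge_zero]]
      by (intro add_mono) simp_all
    finally show ?thesis by simp
  qed
  show ?thesis
  proof (induction k arbitrary: x)
    case (Suc k)
    have "norm x \<le> 2 * onorm R * norm (A x)" by (rule step)
    also have "\<dots> \<le> 2 * onorm R * ((2 * onorm R) ^ k * norm ((A ^^ k) (A x)))"
      using Suc.IH[of "A x"] onorm_pos_le[OF R] by (intro mult_left_mono) auto
    finally show ?case by (simp add: funpow_swap1 mult_ac)
  qed simp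
qed

lemma zero_not_in_asymp_resolvent_set:
  fixes U :: "real \<Rightarrow> 'a::complex_normed_vector \<Rightarrow> 'a" and x0 :: 'a
  assumes U: "Cb U" and x0: "x0 \<noteq> 0" and qn: "asymp_quasinilpotent U"
  shows "0 \<notin> asymp_resolvent_set U"
proof
  assume "0 \<in> asymp_resolvent_set U"
  then obtain R where "Cb R"
    and lim: "((\<lambda>h. onorm (\<lambda>x. R h (- U h x) - x)) \<longlongrightarrow> 0) (at_right 0)"
    unfolding asymp_resolvent_set_def by auto
  obtain M where M: "0 < M" "\<And>h. h \<in> {0<..1} \<Longrightarrow> bop (R h) \<and> onorm (R h) \<le> M"
    using CbE[OF \<open>Cb R\<close>] by blast
  have "\<forall>\<^sub>F h in at_right 0. onorm (\<lambda>x. R h (- U h x) - x) < 1/2"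
    using lim by (rule order_tendstoD) simp
  then have "\<forall>\<^sub>F h in at_right 0. \<forall>k. (1 / (2 * M)) ^ k \<le> onorm (U h ^^ k)"
    using eventually_in_unit_interval
  proof eventually_elim
    case (elim h)
    have bU: "bop (U h)" and bR: "bop (R h)" using U M(2)[OF elim(2)] elim(2) by (auto simp: Cb_def)
    show ?case
    proof
      fix k
      have "norm x0 \<le> (2 * onorm (R h)) ^ k * norm ((U h ^^ k) x0)"
        using elim(1) by (intro norm_le_funpow_of_left_inverse bop_bounded_linear bU bR) simp
      also have "\<dots> \<le> (2 * M) ^ k * (onorm (U h ^^ k) * norm x0)"
        using M(1) M(2)[OF elim(2)] onorm[OF bop_bounded_linear[OF bop_funpow[OF bU]]]
        by (intro mult_mono power_mono) (auto intro: onorm_pos_le bop_bounded_linear bR)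
      finally have "1 \<le> (2 * M) ^ k * onorm (U h ^^ k)"
        using x0 by (simp add: mult.assoc)
      then show "(1 / (2 * M)) ^ k \<le> onorm (U h ^^ k)"
        using M(1) by (simp add: power_divide field_simps)
    qed
  qed
  then have lower: "(1 / (2 * M)) ^ k \<le> asymp_norm (\<lambda>h. U h ^^ k)" for k
    by (intro asymp_norm_ge asymp_bounded_funpow Cb_asymp_bounded U) (auto elim: eventually_mono)
  obtain N where "asymp_norm (\<lambda>h. U h ^^ N) < (1 / (2 * M)) ^ N"
    using ex_asymp_norm_funpow_less[OF Cb_asymp_bounded[OF U] qn, of "1 / (2 * M)"] M(1) by auto
  with lower[of N] show False by simp
qed

definition neumann_op :: "complex \<Rightarrow> ('a::complex_normed_vector \<Rightarrow> 'a) \<Rightarrow> nat \<Rightarrow> 'a \<Rightarrow> 'a" where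
  "neumann_op l A K x = (\<Sum>s<K. inverse l ^ Suc s *\<^sub>C (A ^^ s) x)"

lemma bop_neumann_op: "bop A \<Longrightarrow> bop (neumann_op l A K)"
  unfolding neumann_op_def[abs_def] by (intro bop_sum bop_scaleC bop_funpow)

lemma neumann_op_right_inverse:
  assumes A: "bop A" and l: "l \<noteq> 0"
  shows "l *\<^sub>C neumann_op l A K x - A (neumann_op l A K x) = x - inverse l ^ K *\<^sub>C (A ^^ K) x"
proof -
  have "l *\<^sub>C neumann_op l A K x - A (neumann_op l A K x)
      = (\<Sum>s<K. inverse l ^ s *\<^sub>C (A ^^ s) x - inverse l ^ Suc s *\<^sub>C (A ^^ Suc s) x)"
    using l by (simp add: neumann_op_def scaleC_sum_right bop_apply_sum[OF A] bop_apply_scaleC[OF A]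
        scaleC_scaleC sum_subtractf mult.assoc[symmetric])
  also have "\<dots> = x - inverse l ^ K *\<^sub>C (A ^^ K) x"
    by (subst sum_lessThan_telescope') (simp add: scaleC_one)
  finally show ?thesis .
qed

lemma neumann_op_left_inverse:
  assumes A: "bop A" and l: "l \<noteq> 0"
  shows "neumann_op l A K (l *\<^sub>C x - A x) = x - inverse l ^ K *\<^sub>C (A ^^ K) x"
proof -
  have "neumann_op l A K (l *\<^sub>C x - A x)
      = (\<Sum>s<K. inverse l ^ s *\<^sub>C (A ^^ s) x - inverse l ^ Suc s *\<^sub>C (A ^^ Suc s) x)"
    unfolding neumann_op_def
  proof (rule sum.cong[OF refl])
    fix s
    have "(A ^^ s) (l *\<^sub>C x - A x) = l *\<^sub>C (A ^^ s) x - (A ^^ Suc s) x"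
      using bop_funpow[OF A, of s]
      by (simp add: bop_apply_diff bop_apply_scaleC funpow_Suc_right del: funpow.simps)
    moreover have "inverse l ^ Suc s * l = inverse l ^ s"
      by (simp only: power_Suc2 mult.assoc left_inverse[OF l] mult_1_right)
    ultimately show "inverse l ^ Suc s *\<^sub>C (A ^^ s) (l *\<^sub>C x - A x)
        = inverse l ^ s *\<^sub>C (A ^^ s) x - inverse l ^ Suc s *\<^sub>C (A ^^ Suc s) x"
      by (simp only: scaleC_diff_right scaleC_scaleC)
  qed
  also have "\<dots> = x - inverse l ^ K *\<^sub>C (A ^^ K) x"
    by (subst sum_lessThan_telescope') (simp add: scaleC_one)
  finally show ?thesis .
qed

lemma onorm_funpow_mult_add_le:
  assumes "bop A"
  shows "onorm (A ^^ (i * N + u)) \<le> onorm (A ^^ N) ^ i * onorm A ^ u"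
proof -
  have "onorm (A ^^ (i * N + u)) = onorm (\<lambda>x. ((A ^^ N) ^^ i) ((A ^^ u) x))"
    by (simp add: funpow_add funpow_mult mult.commute[of i N] o_def)
  also have "\<dots> \<le> onorm ((A ^^ N) ^^ i) * onorm (A ^^ u)"
    using assms by (intro onorm_compose_le bop_bounded_linear bop_funpow)
  also have "\<dots> \<le> onorm (A ^^ N) ^ i * onorm A ^ u"
    using assms by (intro mult_mono onorm_funpow_le bop_funpow onorm_pos_le bop_bounded_linear zero_le_power)
  finally show ?thesis .
qed

lemma sum_geometric_blocks_le:
  fixes f g :: "nat \<Rightarrow> real"
  assumes fg: "\<And>i u. u < N \<Longrightarrow> f (i * N + u) \<le> (1/2) ^ i * g u" and g: "\<And>u. 0 \<le> g u"
  shows "(\<Sum>s<q * N. f s) \<le> 2 * (\<Sum>u<N. g u)"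
proof -
  have "(\<Sum>s<q * N. f s) = (\<Sum>i<q. sum f {i * N..<i * N + N})"
    by (rule sum.nat_group[symmetric])
  also have "\<dots> = (\<Sum>i<q. \<Sum>u<N. f (i * N + u))"
    using sum.shift_bounds_nat_ivl[of f 0 "i * N" N for i]
    by (simp add: atLeast0LessThan add.commute)
  also have "\<dots> \<le> (\<Sum>i<q. (1/2) ^ i * (\<Sum>u<N. g u))"
    unfolding sum_distrib_left by (intro sum_mono fg) auto
  also have "\<dots> = (\<Sum>i<q. (1/2::real) ^ i) * (\<Sum>u<N. g u)"
    by (simp add: sum_distrib_right)
  also have "\<dots> \<le> 2 * (\<Sum>u<N. g u)"
    using g by (intro mult_right_mono sum_nonneg) (simp_all add: sum_gp_strict)
  finally show ?thesis .
qed

lemma onorm_neumann_op_le: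
  assumes A: "bop A" and l: "l \<noteq> 0"
    and AN: "onorm (A ^^ N) \<le> cmod l ^ N / 2" and B: "onorm A \<le> B"
  shows "onorm (neumann_op l A (q * N)) \<le> 2 * (\<Sum>u<N. B ^ u / cmod l ^ Suc u)"
proof -
  define t where "t = cmod l"
  have t: "0 < t" using l by (simp add: t_def)
  have "onorm (neumann_op l A (q * N)) \<le> (\<Sum>s<q * N. onorm (\<lambda>x. inverse l ^ Suc s *\<^sub>C (A ^^ s) x))"
    unfolding neumann_op_def[abs_def] using A
    by (intro onorm_sum) (auto intro: bop_bounded_linear bop_scaleC bop_funpow)
  also have "\<dots> \<le> (\<Sum>s<q * N. cmod (inverse l ^ Suc s) * onorm (A ^^ s))"
    using A by (intro sum_mono onorm_scaleC_le bop_bounded_linear bop_funpow)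
  also have "\<dots> = (\<Sum>s<q * N. onorm (A ^^ s) / t ^ Suc s)"
    by (simp add: t_def norm_mult norm_power norm_inverse power_inverse divide_inverse mult.commute)
  also have "\<dots> \<le> 2 * (\<Sum>u<N. B ^ u / t ^ Suc u)"
  proof (rule sum_geometric_blocks_le)
    fix i u
    have "onorm (A ^^ (i * N + u)) \<le> onorm (A ^^ N) ^ i * onorm A ^ u"
      by (rule onorm_funpow_mult_add_le[OF A])
    also have "\<dots> \<le> (t ^ N / 2) ^ i * B ^ u"
      using AN B onorm_pos_le[OF bop_bounded_linear[OF A]]
        onorm_pos_le[OF bop_bounded_linear[OF bop_funpow[OF A, of N]]]
      by (intro mult_mono power_mono) (simp_all add: t_def)
    finally show "onorm (A ^^ (i * N + u)) / t ^ Suc (i * N + u) \<le> (1/2) ^ i * (B ^ u / t ^ Suc u)"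
      using t by (simp add: divide_right_mono power_add power_mult power_divide field_simps)
  next
    fix u
    show "0 \<le> B ^ u / t ^ Suc u"
      using t B onorm_pos_le[OF bop_bounded_linear[OF A]] by simp
  qed
  finally show ?thesis by (simp add: t_def)
qed

lemma onorm_neumann_remainder_le:
  assumes A: "bop A" and l: "l \<noteq> 0" and AN: "onorm (A ^^ N) \<le> cmod l ^ N / 2"
  shows "onorm (\<lambda>x. inverse l ^ (q * N) *\<^sub>C (A ^^ (q * N)) x) \<le> (1/2) ^ q"
proof -
  have "onorm (\<lambda>x. inverse l ^ (q * N) *\<^sub>C (A ^^ (q * N)) x)
      \<le> cmod (inverse l) ^ (q * N) * onorm (A ^^ (q * N))"
    using onorm_scaleC_le[OF bop_bounded_linear[OF bop_funpow[OF A, of "q * N"]], of "inverse l ^ (q * N)"]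
    by (simp add: norm_power)
  also have "\<dots> \<le> cmod (inverse l) ^ (q * N) * (cmod l ^ N / 2) ^ q"
  proof (rule mult_left_mono)
    have "onorm (A ^^ (q * N)) \<le> onorm (A ^^ N) ^ q"
      using onorm_funpow_mult_add_le[OF A, of q N 0] by simp
    also have "\<dots> \<le> (cmod l ^ N / 2) ^ q"
      using AN onorm_pos_le[OF bop_bounded_linear[OF bop_funpow[OF A, of N]]] by (rule power_mono)
    finally show "onorm (A ^^ (q * N)) \<le> (cmod l ^ N / 2) ^ q" .
  qed simp
  also have "\<dots> = ((cmod (inverse l) * cmod l) ^ N / 2) ^ q"
    by (simp add: power_mult_distrib power_divide mult.commute flip: power_mult)
  also have "\<dots> = (1/2) ^ q"
    using l by (simp add: norm_inverse)
  finally show ?thesis .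
qed

lemma half_power_nat_ceiling_le:
  assumes "0 < h"
  shows "(1/2::real) ^ nat \<lceil>1/h\<rceil> \<le> h"
proof -
  define q where "q = nat \<lceil>1/h\<rceil>"
  have "1/h \<le> real q" unfolding q_def by (rule real_nat_ceiling_ge)
  also have "\<dots> < 2 ^ q" by (metis of_nat_less_numeral_power_cancel_iff less_exp)
  finally show ?thesis using assms by (simp add: q_def power_one_over field_simps)
qed

lemma asymp_resolvent_setI:
  fixes U R :: "real \<Rightarrow> 'a::complex_normed_vector \<Rightarrow> 'a"
  assumes U: "Cb U" and R: "Cb R"
    and err: "\<forall>\<^sub>F h in at_right 0. onorm (\<lambda>x. l *\<^sub>C R h x - U h (R h x) - x) \<le> h
      \<and> onorm (\<lambda>x. R h (l *\<^sub>C x - U h x) - x) \<le> h"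
  shows "l \<in> asymp_resolvent_set U"
proof -
  have lim: "(E \<longlongrightarrow> 0) (at_right 0)" if "\<forall>\<^sub>F h in at_right 0. 0 \<le> E h \<and> E h \<le> h" for E
  proof (rule tendsto_sandwich[where f="\<lambda>_. 0" and h="\<lambda>h. h"])
    show "\<forall>\<^sub>F h in at_right 0. 0 \<le> E h" using that by (rule eventually_mono) simp
    show "\<forall>\<^sub>F h in at_right 0. E h \<le> h" using that by (rule eventually_mono) simp
  qed (simp_all add: tendsto_ident_at)
  have "\<forall>\<^sub>F h in at_right 0. bop (U h) \<and> bop (R h)"
    by (rule eventually_mono[OF eventually_in_unit_interval]) (use U R in \<open>simp add: Cb_def\<close>)
  then have bounds: "\<forall>\<^sub>F h in at_right 0.
      (0 \<le> onorm (\<lambda>x. l *\<^sub>C R h x - U h (R h x) - x) \<and> onorm (\<lambda>x. l *\<^sub>C R h x - U h (R h x) - x) \<le> h)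
    \<and> (0 \<le> onorm (\<lambda>x. R h (l *\<^sub>C x - U h x) - x) \<and> onorm (\<lambda>x. R h (l *\<^sub>C x - U h x) - x) \<le> h)"
    using err
  proof eventually_elim
    case (elim h)
    then have bU: "bop (U h)" and bR: "bop (R h)" by simp_all
    have "bop (\<lambda>x. l *\<^sub>C R h x - U h (R h x) - x)"
      using bop_diff[OF bop_diff[OF bop_scaleC[OF bR] bop_compose[OF bU bR]] bop_id] .
    moreover have "bop (\<lambda>x. R h (l *\<^sub>C x - U h x) - x)"
      using bop_diff[OF bop_compose[OF bR bop_diff[OF bop_scaleC[OF bop_id] bU]] bop_id] .
    ultimately show ?case using elim by (simp add: onorm_pos_le bop_bounded_linear)
  qed
  have "((\<lambda>h. onorm (\<lambda>x. l *\<^sub>C R h x - U h (R h x) - x)) \<longlongrightarrow> 0) (at_right 0)"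
    by (rule lim, rule eventually_mono[OF bounds]) simp
  moreover have "((\<lambda>h. onorm (\<lambda>x. R h (l *\<^sub>C x - U h x) - x)) \<longlongrightarrow> 0) (at_right 0)"
    by (rule lim, rule eventually_mono[OF bounds]) simp
  ultimately show ?thesis using R unfolding asymp_resolvent_set_def by blast
qed

lemma Cb_truncated_neumann:
  assumes l: "l \<noteq> 0" and B: "0 < B" "\<And>h. h \<in> {0<..1} \<Longrightarrow> bop (U h) \<and> onorm (U h) \<le> B"
    and UN: "\<And>h. h \<in> {0<..1} \<Longrightarrow> h < \<delta> \<Longrightarrow> onorm (U h ^^ N) \<le> cmod l ^ N / 2"
  shows "Cb (\<lambda>h. if h < \<delta> then neumann_op l (U h) (q h * N) else (\<lambda>x. 0))"
proof -
  define C where "C = 2 * (\<Sum>u<N. B ^ u / cmod l ^ Suc u)"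
  have "0 \<le> C" using B(1) by (auto simp: C_def intro!: sum_nonneg)
  have "bop (neumann_op l (U h) (q h * N)) \<and> onorm (neumann_op l (U h) (q h * N)) \<le> C"
    if "h \<in> {0<..1}" "h < \<delta>" for h
  proof -
    from B(2)[OF that(1)] have bU: "bop (U h)" and UB: "onorm (U h) \<le> B" by simp_all
    show ?thesis
      using onorm_neumann_op_le[OF bU l UN[OF that] UB, of "q h"] bop_neumann_op[OF bU] by (simp add: C_def)
  qed
  with \<open>0 \<le> C\<close> show ?thesis
    unfolding Cb_def bdd_above_def by (intro conjI ballI exI[of _ C]) (auto simp: bop_zero onorm_zero)
qed

lemma nonzero_in_asymp_resolvent_set:
  fixes U :: "real \<Rightarrow> 'a::complex_normed_vector \<Rightarrow> 'a"
  assumes U: "Cb U" and qn: "asymp_quasinilpotent U" and l: "l \<noteq> 0"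
  shows "l \<in> asymp_resolvent_set U"
proof -
  obtain N where "\<forall>\<^sub>F h in at_right 0. onorm (U h ^^ N) \<le> cmod l ^ N / 2"
    using eventually_onorm_funpow_le_half_power[OF Cb_asymp_bounded[OF U] qn, of "cmod l"] l by auto
  with eventually_in_unit_interval
  have "\<forall>\<^sub>F h in at_right 0. h \<in> {0<..1} \<and> onorm (U h ^^ N) \<le> cmod l ^ N / 2"
    by (rule eventually_conj)
  then obtain \<delta> where \<delta>: "0 < \<delta>"
    "\<And>h. 0 < h \<Longrightarrow> h < \<delta> \<Longrightarrow> h \<in> {0<..1} \<and> onorm (U h ^^ N) \<le> cmod l ^ N / 2"
    unfolding eventually_at_right_field by auto
  obtain B where B: "0 < B" "\<And>h. h \<in> {0<..1} \<Longrightarrow> bop (U h) \<and> onorm (U h) \<le> B"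
    using CbE[OF U] by blast
  define R where "R = (\<lambda>h. if h < \<delta> then neumann_op l (U h) (nat \<lceil>1/h\<rceil> * N) else (\<lambda>x. 0))"
  have "Cb R"
    unfolding R_def using \<delta>(2) by (intro Cb_truncated_neumann[OF l B]) auto
  moreover have "\<forall>\<^sub>F h in at_right 0. onorm (\<lambda>x. l *\<^sub>C R h x - U h (R h x) - x) \<le> h
      \<and> onorm (\<lambda>x. R h (l *\<^sub>C x - U h x) - x) \<le> h"
  proof (rule eventually_at_rightI[OF _ \<delta>(1)])
    fix h assume "h \<in> {0<..<\<delta>}"
    then have h: "0 < h" "h < \<delta>" by simp_all
    with \<delta>(2) B(2) have bU: "bop (U h)" and UN: "onorm (U h ^^ N) \<le> cmod l ^ N / 2"
      by auto
    define K where "K = nat \<lceil>1/h\<rceil> * N"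
    have "onorm (\<lambda>x. - (inverse l ^ K *\<^sub>C (U h ^^ K) x)) \<le> h"
      using onorm_neumann_remainder_le[OF bU l UN, of "nat \<lceil>1/h\<rceil>"] half_power_nat_ceiling_le[OF h(1)]
      by (simp add: K_def onorm_neg)
    then show "onorm (\<lambda>x. l *\<^sub>C R h x - U h (R h x) - x) \<le> h
      \<and> onorm (\<lambda>x. R h (l *\<^sub>C x - U h x) - x) \<le> h"
      using h by (simp add: R_def K_def neumann_op_right_inverse[OF bU l] neumann_op_left_inverse[OF bU l])
  qed
  ultimately show ?thesis by (rule asymp_resolvent_setI[OF U])
qed

lemma asymp_spectrum_eq_0_if_quasinilpotent:
  fixes U :: "real \<Rightarrow> 'a::complex_normed_vector \<Rightarrow> 'a" and x0 :: 'a
  assumes "Cb U" and "x0 \<noteq> 0" and "asymp_quasinilpotent U"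
  shows "asymp_spectrum U = {0}"
  using zero_not_in_asymp_resolvent_set[OF assms] nonzero_in_asymp_resolvent_set[OF assms(1,3)]
  unfolding asymp_spectrum_def by blast

section \<open>Roots of unity and a discrete Cauchy formula\<close>

definition geom_sum_op :: "complex \<Rightarrow> ('a::complex_normed_vector \<Rightarrow> 'a) \<Rightarrow> nat \<Rightarrow> 'a \<Rightarrow> 'a" where
  "geom_sum_op z A m x = (\<Sum>s<m. z ^ (m - 1 - s) *\<^sub>C (A ^^ s) x)"

lemma geom_sum_op_Suc: "geom_sum_op z A (Suc m) x = z *\<^sub>C geom_sum_op z A m x + (A ^^ m) x"
proof -
  have "z *\<^sub>C geom_sum_op z A m x = (\<Sum>s<m. z ^ (Suc m - 1 - s) *\<^sub>C (A ^^ s) x)"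
    unfolding geom_sum_op_def scaleC_sum_right
    by (intro sum.cong refl) (simp add: scaleC_scaleC Suc_diff_Suc flip: power_Suc)
  then show ?thesis by (simp add: geom_sum_op_def scaleC_one)
qed

lemma geom_sum_op_factor:
  assumes "bop A"
  shows "z *\<^sub>C geom_sum_op z A m x - A (geom_sum_op z A m x) = z ^ m *\<^sub>C x - (A ^^ m) x"
proof (induction m)
  case 0
  then show ?case by (simp add: geom_sum_op_def bop_apply_0[OF assms] scaleC_one)
next
  case (Suc m)
  define Q where "Q = geom_sum_op z A m x"
  have "z *\<^sub>C geom_sum_op z A (Suc m) x - A (geom_sum_op z A (Suc m) x)
      = z *\<^sub>C (z *\<^sub>C Q - A Q) + z *\<^sub>C (A ^^ m) x - A ((A ^^ m) x)"
    by (simp add: geom_sum_op_Suc Q_def scaleC_add_right scaleC_diff_right bop_apply_add[OF assms]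
        bop_apply_scaleC[OF assms] algebra_simps)
  also have "\<dots> = z ^ Suc m *\<^sub>C x - (A ^^ Suc m) x"
    using Suc by (simp add: Q_def scaleC_diff_right scaleC_scaleC)
  finally show ?case .
qed

lemma sum_lessThan_double:
  fixes f :: "nat \<Rightarrow> 'a::comm_monoid_add"
  shows "(\<Sum>j<2 * n. f j) = (\<Sum>k<n. f (2 * k) + f (Suc (2 * k)))"
  by (induction n) (simp_all add: add.assoc)

definition unit_root :: "nat \<Rightarrow> complex" where
  "unit_root n = cis (pi / real n)"

lemma norm_unit_root [simp]: "cmod (unit_root n) = 1"
  by (simp add: unit_root_def)

lemma unit_root_power_eq_1_iff:
  assumes "1 \<le> n"
  shows "unit_root n ^ k = 1 \<longleftrightarrow> 2 * n dvd k"
proof -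
  have "unit_root n ^ k = exp (2 * of_real pi * \<i> * of_nat k / of_nat (2 * n))"
    unfolding unit_root_def Complex.DeMoivre unfolding cis_conv_exp by (simp add: field_simps)
  with complex_root_unity_eq_1[of "2 * n" k] assms show ?thesis by simp
qed

lemma unit_root_power_eq_minus_1: "1 \<le> n \<Longrightarrow> unit_root n ^ n = -1"
  unfolding unit_root_def Complex.DeMoivre by simp

lemma norm_1_minus_unit_root: "cmod (1 - unit_root n) \<le> pi / n"
proof -
  have "cmod (1 - unit_root n) = cmod (exp (\<i> * complex_of_real (pi / n)) - 1)"
    by (simp add: unit_root_def cis_conv_exp norm_minus_commute)
  also have "\<dots> = 2 * \<bar>sin (pi / n / 2)\<bar>" by (rule dist_exp_i_1)
  also have "\<dots> \<le> pi / n" using abs_sin_x_le_abs_x[of "pi / n / 2"] by simp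
  finally show ?thesis .
qed

lemma sum_unit_root_powers:
  assumes "1 \<le> n"
  shows "(\<Sum>j<2*n. (unit_root n ^ k) ^ j) = (if 2 * n dvd k then of_nat (2 * n) else 0)"
proof (cases "2 * n dvd k")
  case True
  then have "unit_root n ^ k = 1" using unit_root_power_eq_1_iff[OF assms] by simp
  with True show ?thesis by simp
next
  case False
  have "(unit_root n ^ k) ^ (2 * n) = (unit_root n ^ (2 * n)) ^ k"
    by (simp flip: power_mult add: mult.commute)
  also have "unit_root n ^ (2 * n) = 1" using unit_root_power_eq_1_iff[OF assms] by simp
  finally show ?thesis
    using False unit_root_power_eq_1_iff[OF assms, of k] by (simp add: sum_gp_strict)
qed

text \<open>The nodes \<open>\<lambda>\<^sub>j\<close> are \<open>2n\<close> equally spaced points on the circle \<open>|\<lambda>| = r\<close>, and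
  \<open>\<lambda>\<^sub>j\<^sup>n\<^sup>+\<^sup>1 = r\<^sup>n\<^sup>+\<^sup>1 w\<^sub>j\<close>. Hence \<open>\<Sum>\<^sub>j w\<^sub>j R(\<lambda>\<^sub>j)\<close> is, up to the factor \<open>2n / r\<^sup>n\<^sup>+\<^sup>1\<close>, the Riemann
  sum of the Cauchy integral \<open>(2\<pi>i)\<^sup>-\<^sup>1 \<ointegral> \<lambda>\<^sup>n R(\<lambda>) d\<lambda>\<close>, which for the true resolvent is \<open>U\<^sup>n\<close>.\<close>

definition contour_node :: "nat \<Rightarrow> real \<Rightarrow> nat \<Rightarrow> complex" where
  "contour_node n r j = unit_root n ^ j * complex_of_real r"

definition contour_weight :: "nat \<Rightarrow> nat \<Rightarrow> complex" where
  "contour_weight n j = unit_root n ^ (j * (n + 1))"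

lemma norm_contour_node: "0 \<le> r \<Longrightarrow> cmod (contour_node n r j) = r"
  by (simp add: contour_node_def norm_mult norm_power)

lemma norm_contour_weight [simp]: "cmod (contour_weight n j) = 1"
  by (simp add: contour_weight_def norm_power)

lemma contour_node_nonzero: "0 < r \<Longrightarrow> contour_node n r j \<noteq> 0"
  using norm_contour_node[of r n j] by auto

lemma contour_node_power_double:
  assumes "1 \<le> n"
  shows "contour_node n r j ^ (2 * n) = complex_of_real r ^ (2 * n)"
proof -
  have "contour_node n r j ^ (2 * n) = (unit_root n ^ (2 * n)) ^ j * complex_of_real r ^ (2 * n)"
    by (simp add: contour_node_def power_mult_distrib mult.commute flip: power_mult)
  then show ?thesis using unit_root_power_eq_1_iff[OF assms, of "2 * n"] by simp
qed

lemma contour_node_odd: "contour_node n r (Suc (2 * k)) = unit_root n * contour_node n r (2 * k)"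
  by (simp add: contour_node_def)

lemma contour_weight_odd:
  assumes "1 \<le> n"
  shows "contour_weight n (Suc (2 * k)) = - (contour_weight n (2 * k) * unit_root n)"
proof -
  have "contour_weight n (Suc (2 * k)) = contour_weight n (2 * k) * unit_root n ^ n * unit_root n"
    by (simp add: contour_weight_def algebra_simps power_add)
  then show ?thesis using unit_root_power_eq_minus_1[OF assms] by simp
qed

lemma contour_weight_node_power_sum:
  assumes n: "1 \<le> n" and s: "s < 2 * n"
  shows "(\<Sum>j<2*n. contour_weight n j * contour_node n r j ^ (2 * n - 1 - s))
       = (if s = n then of_nat (2 * n) * complex_of_real r ^ (n - 1) else 0)"
proof -
  have "contour_weight n j * contour_node n r j ^ (2 * n - 1 - s)
      = complex_of_real r ^ (2 * n - 1 - s) * (unit_root n ^ (3 * n - s)) ^ j" for j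
  proof -
    have "n + 1 + (2 * n - 1 - s) = 3 * n - s" using n s by simp
    then have "j * (n + 1) + j * (2 * n - 1 - s) = (3 * n - s) * j"
      by (simp only: add_mult_distrib2[symmetric] mult.commute)
    then show ?thesis
      by (simp add: contour_weight_def contour_node_def power_mult_distrib mult.commute
          flip: power_mult power_add)
  qed
  then have "(\<Sum>j<2*n. contour_weight n j * contour_node n r j ^ (2 * n - 1 - s))
      = complex_of_real r ^ (2 * n - 1 - s) * (\<Sum>j<2*n. (unit_root n ^ (3 * n - s)) ^ j)"
    by (simp add: sum_distrib_left)
  moreover have "2 * n dvd 3 * n - s \<longleftrightarrow> s = n"
  proof
    assume "2 * n dvd 3 * n - s"
    then obtain k where k: "3 * n - s = 2 * n * k" by (elim dvdE)
    with n s have less: "n < 2 * n * k" and le: "2 * n * k \<le> 3 * n" by linarith+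
    have "k \<noteq> 0" using less by (intro notI) simp
    moreover have "\<not> 2 \<le> k"
    proof
      assume "2 \<le> k"
      then have "2 * n * 2 \<le> 2 * n * k" by (rule mult_le_mono2)
      with le n show False by linarith
    qed
    ultimately have "k = 1" by linarith
    with k s show "s = n" by auto
  qed simp
  ultimately show ?thesis
    using sum_unit_root_powers[OF n, of "3 * n - s"] by (auto simp: numeral_eq_Suc)
qed

lemma contour_weight_geom_sum_op:
  assumes n: "1 \<le> n"
  shows "(\<Sum>j<2*n. contour_weight n j *\<^sub>C geom_sum_op (contour_node n r j) A (2 * n) x)
       = (of_nat (2 * n) * complex_of_real r ^ (n - 1)) *\<^sub>C (A ^^ n) x"
proof -
  have "(\<Sum>j<2*n. contour_weight n j *\<^sub>C geom_sum_op (contour_node n r j) A (2 * n) x)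
      = (\<Sum>j<2*n. \<Sum>s<2*n. (contour_weight n j * contour_node n r j ^ (2 * n - 1 - s)) *\<^sub>C (A ^^ s) x)"
    by (simp add: geom_sum_op_def scaleC_sum_right scaleC_scaleC)
  also have "\<dots> = (\<Sum>s<2*n. \<Sum>j<2*n. (contour_weight n j * contour_node n r j ^ (2 * n - 1 - s)) *\<^sub>C (A ^^ s) x)"
    by (rule sum.swap)
  also have "\<dots> = (\<Sum>s<2*n. (\<Sum>j<2*n. contour_weight n j * contour_node n r j ^ (2 * n - 1 - s)) *\<^sub>C (A ^^ s) x)"
    by (simp only: scaleC_sum_left)
  also have "\<dots> = (\<Sum>s<2*n. if s = n then (of_nat (2 * n) * complex_of_real r ^ (n - 1)) *\<^sub>C (A ^^ s) x else 0)"
  proof (rule sum.cong[OF refl])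
    fix s assume "s \<in> {..<2*n}"
    then show "(\<Sum>j<2*n. contour_weight n j * contour_node n r j ^ (2 * n - 1 - s)) *\<^sub>C (A ^^ s) x
      = (if s = n then (of_nat (2 * n) * complex_of_real r ^ (n - 1)) *\<^sub>C (A ^^ s) x else 0)"
      by (simp only: contour_weight_node_power_sum[OF n] lessThan_iff) simp
  qed
  also have "\<dots> = (of_nat (2 * n) * complex_of_real r ^ (n - 1)) *\<^sub>C (A ^^ n) x"
    using n by (subst sum.delta) auto
  finally show ?thesis .
qed

section \<open>Asymptotic resolvents away from \<open>0\<close> force quasinilpotence\<close>

lemma resolvent_identity_defects:
  assumes R1: "bop R1" and R2: "bop R2" and A: "bop A"
  shows "R1 x - R2 x - (l' - l) *\<^sub>C R1 (R2 x)
       = (R1 (l *\<^sub>C R2 x - A (R2 x)) - R2 x) - R1 (l' *\<^sub>C R2 x - A (R2 x) - x)"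
  by (simp add: bop_apply_diff[OF R1] bop_apply_add[OF R1] bop_apply_scaleC[OF R1] scaleC_diff_left
      algebra_simps)

locale asymp_resolvent_family =
  fixes U :: "real \<Rightarrow> 'a::complex_normed_vector \<Rightarrow> 'a"
    and R :: "complex \<Rightarrow> real \<Rightarrow> 'a \<Rightarrow> 'a"
  assumes Cb_U: "Cb U"
    and Cb_R: "l \<noteq> 0 \<Longrightarrow> Cb (R l)"
    and R_right_inverse:
      "l \<noteq> 0 \<Longrightarrow> ((\<lambda>h. onorm (\<lambda>x. l *\<^sub>C R l h x - U h (R l h x) - x)) \<longlongrightarrow> 0) (at_right 0)"
    and R_left_inverse:
      "l \<noteq> 0 \<Longrightarrow> ((\<lambda>h. onorm (\<lambda>x. R l h (l *\<^sub>C x - U h x) - x)) \<longlongrightarrow> 0) (at_right 0)"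
begin

lemma asymp_bounded_U: "asymp_bounded U"
  by (rule Cb_asymp_bounded[OF Cb_U])

lemma asymp_bounded_R: "l \<noteq> 0 \<Longrightarrow> asymp_bounded (R l)"
  by (rule Cb_asymp_bounded[OF Cb_R])

lemma bop_U: "h \<in> {0<..1} \<Longrightarrow> bop (U h)"
  using Cb_U by (simp add: Cb_def)

lemma bop_R: "l \<noteq> 0 \<Longrightarrow> h \<in> {0<..1} \<Longrightarrow> bop (R l h)"
  using Cb_R by (simp add: Cb_def)

definition left_defect :: "complex \<Rightarrow> real \<Rightarrow> 'a \<Rightarrow> 'a" where
  "left_defect l h x = R l h (l *\<^sub>C x - U h x) - x"

definition right_defect :: "complex \<Rightarrow> real \<Rightarrow> 'a \<Rightarrow> 'a" where
  "right_defect l h x = l *\<^sub>C R l h x - U h (R l h x) - x"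

lemma asymp_bounded_left_defect:
  assumes l: "l \<noteq> 0"
  shows "asymp_bounded (left_defect l)"
  unfolding left_defect_def[abs_def]
  by (rule asymp_bounded_diff[OF asymp_bounded_compose[OF asymp_bounded_R[OF l]
        asymp_bounded_diff[OF asymp_bounded_scaleC[OF asymp_bounded_id] asymp_bounded_U]] asymp_bounded_id])

lemma asymp_bounded_right_defect:
  assumes l: "l \<noteq> 0"
  shows "asymp_bounded (right_defect l)"
  unfolding right_defect_def[abs_def]
  by (rule asymp_bounded_diff[OF asymp_bounded_diff[OF asymp_bounded_scaleC[OF asymp_bounded_R[OF l]]
        asymp_bounded_compose[OF asymp_bounded_U asymp_bounded_R[OF l]]] asymp_bounded_id])

lemma asymp_norm_left_defect:
  assumes "l \<noteq> 0"
  shows "asymp_norm (left_defect l) = 0"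
  using asymp_bounded_left_defect[OF assms] R_left_inverse[OF assms]
  unfolding left_defect_def[abs_def] by (rule asymp_norm_eq_0)

lemma asymp_norm_right_defect:
  assumes "l \<noteq> 0"
  shows "asymp_norm (right_defect l) = 0"
  using asymp_bounded_right_defect[OF assms] R_right_inverse[OF assms]
  unfolding right_defect_def[abs_def] by (rule asymp_norm_eq_0)

lemma asymp_resolvent_identity:
  assumes l: "l \<noteq> 0" and l': "l' \<noteq> 0"
  shows "asymp_norm (\<lambda>h x. R l h x - R l' h x - (l' - l) *\<^sub>C R l h (R l' h x)) = 0"
proof -
  have bL: "asymp_bounded (\<lambda>h x. left_defect l h (R l' h x))"
    by (rule asymp_bounded_compose[OF asymp_bounded_left_defect[OF l] asymp_bounded_R[OF l']])
  have bR: "asymp_bounded (\<lambda>h x. R l h (right_defect l' h x))"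
    by (rule asymp_bounded_compose[OF asymp_bounded_R[OF l] asymp_bounded_right_defect[OF l']])
  have "\<forall>\<^sub>F h in at_right 0. (\<lambda>x. R l h x - R l' h x - (l' - l) *\<^sub>C R l h (R l' h x))
      = (\<lambda>x. left_defect l h (R l' h x) - R l h (right_defect l' h x))"
    by (rule eventually_mono[OF eventually_in_unit_interval])
      (simp add: left_defect_def right_defect_def resolvent_identity_defects[OF bop_R bop_R bop_U] l l')
  then have "asymp_norm (\<lambda>h x. R l h x - R l' h x - (l' - l) *\<^sub>C R l h (R l' h x))
      = asymp_norm (\<lambda>h x. left_defect l h (R l' h x) - R l h (right_defect l' h x))"
    by (rule asymp_norm_cong)
  moreover have "asymp_norm (\<lambda>h x. left_defect l h (R l' h x) - R l h (right_defect l' h x))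
      \<le> asymp_norm (\<lambda>h x. left_defect l h (R l' h x)) + asymp_norm (\<lambda>h x. R l h (right_defect l' h x))"
    by (rule asymp_norm_diff[OF bL bR])
  moreover have "\<dots> \<le> asymp_norm (left_defect l) * asymp_norm (R l') + asymp_norm (R l) * asymp_norm (right_defect l')"
    by (rule add_mono[OF asymp_norm_compose[OF asymp_bounded_left_defect[OF l] asymp_bounded_R[OF l']]
          asymp_norm_compose[OF asymp_bounded_R[OF l] asymp_bounded_right_defect[OF l']]])
  moreover have "0 \<le> asymp_norm (\<lambda>h x. left_defect l h (R l' h x) - R l h (right_defect l' h x))"
    by (rule asymp_norm_nonneg[OF asymp_bounded_diff[OF bL bR]])
  ultimately show ?thesis by (simp add: asymp_norm_left_defect asymp_norm_right_defect l l')
qed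

lemma asymp_norm_resolvent_difference_le:
  assumes l: "l \<noteq> 0" and l': "l' \<noteq> 0"
  shows "asymp_norm (\<lambda>h x. R l h x - R l' h x) \<le> cmod (l' - l) * asymp_norm (R l) * asymp_norm (R l')"
proof -
  have bRR: "asymp_bounded (\<lambda>h x. R l h (R l' h x))"
    by (rule asymp_bounded_compose[OF asymp_bounded_R[OF l] asymp_bounded_R[OF l']])
  have bK: "asymp_bounded (\<lambda>h x. R l h x - R l' h x - (l' - l) *\<^sub>C R l h (R l' h x))"
    by (rule asymp_bounded_diff[OF asymp_bounded_diff[OF asymp_bounded_R[OF l] asymp_bounded_R[OF l']]
          asymp_bounded_scaleC[OF bRR]])
  have "asymp_norm (\<lambda>h x. R l h x - R l' h x)
      = asymp_norm (\<lambda>h x. (R l h x - R l' h x - (l' - l) *\<^sub>C R l h (R l' h x)) + (l' - l) *\<^sub>C R l h (R l' h x))"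
    by simp
  also have "\<dots> \<le> asymp_norm (\<lambda>h x. R l h x - R l' h x - (l' - l) *\<^sub>C R l h (R l' h x))
      + asymp_norm (\<lambda>h x. (l' - l) *\<^sub>C R l h (R l' h x))"
    by (rule asymp_norm_add[OF bK asymp_bounded_scaleC[OF bRR]])
  also have "\<dots> \<le> 0 + cmod (l' - l) * asymp_norm (\<lambda>h x. R l h (R l' h x))"
    by (rule add_mono[OF eq_refl[OF asymp_resolvent_identity[OF l l']] asymp_norm_scaleC[OF bRR]])
  also have "\<dots> \<le> 0 + cmod (l' - l) * (asymp_norm (R l) * asymp_norm (R l'))"
    by (intro add_left_mono mult_left_mono asymp_norm_compose[OF asymp_bounded_R[OF l] asymp_bounded_R[OF l']]
        norm_ge_zero)
  finally show ?thesis by (simp add: mult.assoc)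
qed

lemma asymp_norm_resolvent_le_double:
  assumes l: "l \<noteq> 0" and l0: "l0 \<noteq> 0" and close: "cmod (l - l0) * asymp_norm (R l0) \<le> 1/2"
  shows "asymp_norm (R l) \<le> 2 * asymp_norm (R l0)"
proof -
  have "asymp_norm (R l) = asymp_norm (\<lambda>h x. (R l h x - R l0 h x) + R l0 h x)"
    by simp
  also have "\<dots> \<le> asymp_norm (\<lambda>h x. R l h x - R l0 h x) + asymp_norm (R l0)"
    using l l0 asymp_norm_add[of "\<lambda>h x. R l h x - R l0 h x" "R l0"]
    by (simp add: asymp_bounded_diff asymp_bounded_R)
  also have "\<dots> \<le> cmod (l0 - l) * asymp_norm (R l) * asymp_norm (R l0) + asymp_norm (R l0)"
    using l l0 by (intro add_right_mono asymp_norm_resolvent_difference_le)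
  also have "\<dots> = (cmod (l - l0) * asymp_norm (R l0)) * asymp_norm (R l) + asymp_norm (R l0)"
    by (simp add: norm_minus_commute mult_ac)
  also have "\<dots> \<le> 1/2 * asymp_norm (R l) + asymp_norm (R l0)"
    by (intro add_right_mono mult_right_mono close asymp_norm_nonneg asymp_bounded_R l)
  finally show ?thesis by simp
qed

lemma resolvent_bounded_on_annulus:
  assumes "0 < \<rho>"
  obtains M where "0 \<le> M" "\<And>l. \<rho> \<le> cmod l \<Longrightarrow> cmod l \<le> \<rho>' \<Longrightarrow> asymp_norm (R l) \<le> M"
proof -
  define A where "A = cball (0::complex) \<rho>' - ball 0 \<rho>"
  have A0: "l \<noteq> 0" if "l \<in> A" for l using that assms by (auto simp: A_def)
  define r where "r c = 1 / (2 * (asymp_norm (R c) + 1))" for c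
  have r: "0 < r c" if "c \<in> A" for c
    using asymp_norm_nonneg[OF asymp_bounded_R[OF A0[OF that]]] by (simp add: r_def)
  have "compact A" unfolding A_def by (intro compact_diff compact_cball open_ball)
  moreover have "A \<subseteq> (\<Union>c\<in>A. ball c (r c))" using r by force
  ultimately obtain C where C: "C \<subseteq> A" "finite C" "A \<subseteq> (\<Union>c\<in>C. ball c (r c))"
    by (metis compactE_image open_ball)
  define M where "M = (\<Sum>c\<in>C. 2 * asymp_norm (R c))"
  have nonneg: "0 \<le> 2 * asymp_norm (R c)" if "c \<in> C" for c
    using asymp_norm_nonneg[OF asymp_bounded_R[OF A0]] that C(1) by auto
  have "asymp_norm (R l) \<le> M" if "\<rho> \<le> cmod l" "cmod l \<le> \<rho>'" for l
  proof -
    have "l \<in> A" using that by (auto simp: A_def)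
    with C(3) obtain c where c: "c \<in> C" "dist c l < r c" by auto
    with C(1) have "c \<in> A" by auto
    have "cmod (l - c) * asymp_norm (R c) \<le> r c * asymp_norm (R c)"
      using c nonneg[OF c(1)] by (intro mult_right_mono) (simp_all add: dist_norm norm_minus_commute)
    also have "\<dots> \<le> 1/2" using nonneg[OF c(1)] by (simp add: r_def field_simps)
    finally have "asymp_norm (R l) \<le> 2 * asymp_norm (R c)"
      by (rule asymp_norm_resolvent_le_double[OF A0[OF \<open>l \<in> A\<close>] A0[OF \<open>c \<in> A\<close>]])
    also have "\<dots> \<le> M" unfolding M_def by (rule member_le_sum) (use c(1) C(2) nonneg in auto)
    finally show ?thesis .
  qed
  moreover have "0 \<le> M" unfolding M_def using nonneg by (rule sum_nonneg)
  ultimately show ?thesis using that by blast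
qed

definition contour_sum :: "nat \<Rightarrow> real \<Rightarrow> real \<Rightarrow> 'a \<Rightarrow> 'a" where
  "contour_sum n r h x = (\<Sum>j<2*n. contour_weight n j *\<^sub>C R (contour_node n r j) h x)"

lemma asymp_bounded_contour_sum: "0 < r \<Longrightarrow> asymp_bounded (contour_sum n r)"
  unfolding contour_sum_def[abs_def]
  by (intro asymp_bounded_sum asymp_bounded_scaleC asymp_bounded_R contour_node_nonzero)

lemma asymp_norm_resolvent_rotation_le:
  assumes \<mu>: "\<mu> \<noteq> 0" and z: "z \<noteq> 0"
    and M: "asymp_norm (R \<mu>) \<le> M" "asymp_norm (R (z * \<mu>)) \<le> M"
  shows "asymp_norm (\<lambda>h x. R \<mu> h x - z *\<^sub>C R (z * \<mu>) h x) \<le> cmod (1 - z) * (cmod \<mu> * M\<^sup>2 + M)"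
proof -
  have z\<mu>: "z * \<mu> \<noteq> 0" using \<mu> z by simp
  have R0: "0 \<le> asymp_norm (R \<mu>)" "0 \<le> asymp_norm (R (z * \<mu>))"
    using asymp_norm_nonneg[OF asymp_bounded_R[OF \<mu>]] asymp_norm_nonneg[OF asymp_bounded_R[OF z\<mu>]] .
  have "cmod (z * \<mu> - \<mu>) = cmod (1 - z) * cmod \<mu>"
    by (simp add: norm_mult[symmetric] left_diff_distrib norm_minus_commute)
  moreover have "asymp_norm (\<lambda>h x. R \<mu> h x - z *\<^sub>C R (z * \<mu>) h x)
      = asymp_norm (\<lambda>h x. (R \<mu> h x - R (z * \<mu>) h x) + (1 - z) *\<^sub>C R (z * \<mu>) h x)"
    by (simp add: scaleC_diff_left scaleC_one)
  moreover have "\<dots> \<le> asymp_norm (\<lambda>h x. R \<mu> h x - R (z * \<mu>) h x)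
      + asymp_norm (\<lambda>h x. (1 - z) *\<^sub>C R (z * \<mu>) h x)"
    by (rule asymp_norm_add[OF asymp_bounded_diff[OF asymp_bounded_R[OF \<mu>] asymp_bounded_R[OF z\<mu>]]
          asymp_bounded_scaleC[OF asymp_bounded_R[OF z\<mu>]]])
  moreover have "\<dots> \<le> cmod (z * \<mu> - \<mu>) * asymp_norm (R \<mu>) * asymp_norm (R (z * \<mu>))
      + cmod (1 - z) * asymp_norm (R (z * \<mu>))"
    by (rule add_mono[OF asymp_norm_resolvent_difference_le[OF \<mu> z\<mu>]
          asymp_norm_scaleC[OF asymp_bounded_R[OF z\<mu>]]])
  moreover have "\<dots> \<le> cmod (z * \<mu> - \<mu>) * M * M + cmod (1 - z) * M"
    using M R0 by (intro add_mono mult_mono mult_left_mono) simp_all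
  ultimately show ?thesis by (simp add: algebra_simps power2_eq_square)
qed

lemma contour_sum_pairs:
  assumes "1 \<le> n"
  shows "contour_sum n r h x = (\<Sum>k<n. contour_weight n (2 * k) *\<^sub>C
    (R (contour_node n r (2 * k)) h x - unit_root n *\<^sub>C R (unit_root n * contour_node n r (2 * k)) h x))"
  unfolding contour_sum_def sum_lessThan_double
  by (simp add: contour_weight_odd[OF assms] contour_node_odd scaleC_diff_right scaleC_scaleC
      scaleC_minus_left)

lemma asymp_norm_contour_sum_le:
  assumes n: "1 \<le> n" and r: "0 < \<rho>" "\<rho> \<le> r" "r \<le> \<rho>'"
    and M: "\<And>l. \<rho> \<le> cmod l \<Longrightarrow> cmod l \<le> \<rho>' \<Longrightarrow> asymp_norm (R l) \<le> M"
  shows "asymp_norm (contour_sum n r) \<le> pi * (\<rho>' * M\<^sup>2 + M)"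
proof -
  define z where "z = unit_root n"
  define \<mu> where "\<mu> k = contour_node n r (2 * k)" for k
  define T where "T k h x = R (\<mu> k) h x - z *\<^sub>C R (z * \<mu> k) h x" for k h x
  have "cmod z = 1" by (simp add: z_def)
  then have z: "z \<noteq> 0" "cmod z = 1" by auto
  have \<mu>: "\<mu> k \<noteq> 0" "cmod (\<mu> k) = r" "cmod (z * \<mu> k) = r" for k
    using r by (auto simp: \<mu>_def z norm_mult norm_contour_node contour_node_nonzero)
  have RM: "asymp_norm (R (\<mu> k)) \<le> M" "asymp_norm (R (z * \<mu> k)) \<le> M" for k
    using M \<mu> r by simp_all
  have M0: "0 \<le> M" using RM(1)[of 0] asymp_norm_nonneg[OF asymp_bounded_R[OF \<mu>(1)[of 0]]] by linarith
  have bT: "asymp_bounded (T k)" for k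
    unfolding T_def[abs_def] using \<mu> z
    by (intro asymp_bounded_diff asymp_bounded_scaleC asymp_bounded_R) auto
  have "asymp_norm (contour_sum n r) = asymp_norm (\<lambda>h x. \<Sum>k<n. contour_weight n (2 * k) *\<^sub>C T k h x)"
    by (rule arg_cong[where f=asymp_norm], intro ext) (simp add: contour_sum_pairs[OF n] T_def \<mu>_def z_def)
  also have "\<dots> \<le> (\<Sum>k<n. asymp_norm (\<lambda>h x. contour_weight n (2 * k) *\<^sub>C T k h x))"
    by (rule asymp_norm_sum) (simp_all add: asymp_bounded_scaleC bT)
  also have "\<dots> \<le> (\<Sum>k<n. pi / n * (\<rho>' * M\<^sup>2 + M))"
  proof (rule sum_mono)
    fix k
    have "asymp_norm (\<lambda>h x. contour_weight n (2 * k) *\<^sub>C T k h x) \<le> asymp_norm (T k)"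
      using asymp_norm_scaleC[OF bT, of "contour_weight n (2 * k)"] by simp
    also have "\<dots> \<le> cmod (1 - z) * (r * M\<^sup>2 + M)"
      unfolding T_def[abs_def] using asymp_norm_resolvent_rotation_le[OF \<mu>(1) z(1) RM] \<mu>(2) by simp
    also have "\<dots> \<le> pi / n * (\<rho>' * M\<^sup>2 + M)"
      using norm_1_minus_unit_root[of n] r M0
      by (intro mult_mono add_right_mono mult_right_mono) (simp_all add: z_def)
    finally show "asymp_norm (\<lambda>h x. contour_weight n (2 * k) *\<^sub>C T k h x) \<le> pi / n * (\<rho>' * M\<^sup>2 + M)" .
  qed
  also have "\<dots> = pi * (\<rho>' * M\<^sup>2 + M)" using n by simp
  finally show ?thesis .
qed
lemma contour_sum_apply:
  assumes n: "1 \<le> n" and r: "0 < r" and h: "h \<in> {0<..1}"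
  shows "contour_sum n r h (complex_of_real r ^ (2 * n) *\<^sub>C x - (U h ^^ (2 * n)) x)
    = (of_nat (2 * n) * complex_of_real r ^ (n - 1)) *\<^sub>C (U h ^^ n) x
      + (\<Sum>j<2*n. contour_weight n j *\<^sub>C
          left_defect (contour_node n r j) h (geom_sum_op (contour_node n r j) (U h) (2 * n) x))"
proof -
  have "R (contour_node n r j) h (complex_of_real r ^ (2 * n) *\<^sub>C x - (U h ^^ (2 * n)) x)
      = left_defect (contour_node n r j) h (geom_sum_op (contour_node n r j) (U h) (2 * n) x)
        + geom_sum_op (contour_node n r j) (U h) (2 * n) x" for j
    using geom_sum_op_factor[OF bop_U[OF h], of "contour_node n r j" "2 * n" x]
    by (simp add: left_defect_def contour_node_power_double[OF n])
  then have "contour_sum n r h (complex_of_real r ^ (2 * n) *\<^sub>C x - (U h ^^ (2 * n)) x)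
      = (\<Sum>j<2*n. contour_weight n j *\<^sub>C geom_sum_op (contour_node n r j) (U h) (2 * n) x)
        + (\<Sum>j<2*n. contour_weight n j *\<^sub>C
          left_defect (contour_node n r j) h (geom_sum_op (contour_node n r j) (U h) (2 * n) x))"
    by (simp add: contour_sum_def scaleC_add_right sum.distrib add.commute)
  then show ?thesis by (simp only: contour_weight_geom_sum_op[OF n])
qed

lemma asymp_norm_left_defect_compose:
  assumes "l \<noteq> 0" and "asymp_bounded F"
  shows "asymp_norm (\<lambda>h x. c *\<^sub>C left_defect l h (F h x)) = 0"
proof -
  have F: "asymp_bounded (\<lambda>h x. left_defect l h (F h x))"
    by (rule asymp_bounded_compose[OF asymp_bounded_left_defect[OF assms(1)] assms(2)])
  have "asymp_norm (\<lambda>h x. c *\<^sub>C left_defect l h (F h x)) \<le> cmod c * (asymp_norm (left_defect l) * asymp_norm F)"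
    by (rule order_trans[OF asymp_norm_scaleC[OF F] mult_left_mono[OF
          asymp_norm_compose[OF asymp_bounded_left_defect[OF assms(1)] assms(2)] norm_ge_zero]])
  with asymp_norm_nonneg[OF asymp_bounded_scaleC[OF F], of c] show ?thesis
    by (simp add: asymp_norm_left_defect[OF assms(1)])
qed

lemma asymp_norm_funpow_le_contour_sum:
  assumes n: "1 \<le> n" and r: "0 < r"
  shows "2 * real n * r ^ (n - 1) * asymp_norm (\<lambda>h. U h ^^ n)
    \<le> asymp_norm (contour_sum n r) * (r ^ (2 * n) + (asymp_norm (\<lambda>h. U h ^^ n))\<^sup>2)"
proof -
  define c where "c = of_nat (2 * n) * complex_of_real r ^ (n - 1)"
  define G where "G h x = complex_of_real r ^ (2 * n) *\<^sub>C x - (U h ^^ (2 * n)) x" for h x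
  define V where "V j h x = contour_weight n j *\<^sub>C
    left_defect (contour_node n r j) h (geom_sum_op (contour_node n r j) (U h) (2 * n) x)" for j h x
  have bG: "asymp_bounded G"
    unfolding G_def[abs_def]
    by (rule asymp_bounded_diff[OF asymp_bounded_scaleC[OF asymp_bounded_id] asymp_bounded_funpow[OF asymp_bounded_U]])
  have bQ: "asymp_bounded (\<lambda>h. geom_sum_op l (U h) m)" for l m
    unfolding geom_sum_op_def[abs_def]
    by (intro asymp_bounded_sum asymp_bounded_scaleC asymp_bounded_funpow asymp_bounded_U)
  have bV: "asymp_bounded (V j)" and V0: "asymp_norm (V j) = 0" for j
    unfolding V_def[abs_def] using contour_node_nonzero[OF r]
    by (auto intro!: asymp_bounded_scaleC asymp_bounded_compose[OF asymp_bounded_left_defect bQ]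
        asymp_norm_left_defect_compose[OF _ bQ])
  have "\<forall>\<^sub>F h in at_right 0. (\<lambda>x. c *\<^sub>C (U h ^^ n) x) = (\<lambda>x. contour_sum n r h (G h x) - (\<Sum>j<2*n. V j h x))"
    by (rule eventually_mono[OF eventually_in_unit_interval])
      (simp add: contour_sum_apply[OF n r] G_def V_def c_def)
  then have "cmod c * asymp_norm (\<lambda>h. U h ^^ n)
      = asymp_norm (\<lambda>h x. contour_sum n r h (G h x) - (\<Sum>j<2*n. V j h x))"
    using r n by (simp add: asymp_norm_cong asymp_norm_scaleC_eq[OF asymp_bounded_funpow[OF asymp_bounded_U], symmetric] c_def)
  also have "\<dots> \<le> asymp_norm (contour_sum n r) * asymp_norm G + (\<Sum>j<2*n. asymp_norm (V j))"
    by (rule order_trans[OF asymp_norm_diff add_mono[OF asymp_norm_compose asymp_norm_sum]])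
      (simp_all add: asymp_bounded_compose asymp_bounded_contour_sum[OF r] bG asymp_bounded_sum bV)
  also have "\<dots> \<le> asymp_norm (contour_sum n r) * (r ^ (2 * n) + (asymp_norm (\<lambda>h. U h ^^ n))\<^sup>2)"
  proof -
    have "asymp_norm G \<le> cmod (complex_of_real r ^ (2 * n)) + asymp_norm (\<lambda>h. U h ^^ (2 * n))"
      unfolding G_def[abs_def] by (rule asymp_norm_scaleC_id_diff[OF asymp_bounded_funpow[OF asymp_bounded_U]])
    also have "\<dots> \<le> r ^ (2 * n) + (asymp_norm (\<lambda>h. U h ^^ n))\<^sup>2"
      using asymp_norm_funpow_add[OF asymp_bounded_U, of n n] r by (simp add: norm_power mult_2 power2_eq_square)
    finally show ?thesis
      using V0 asymp_norm_nonneg[OF asymp_bounded_contour_sum[OF r]] by (simp add: mult_left_mono)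
  qed
  finally show ?thesis using r by (simp add: c_def norm_mult norm_power)
qed

lemma real_le_asymp_norm_contour_sum:
  assumes n: "1 \<le> n" and t: "0 < t" and tn: "t ^ n = asymp_norm (\<lambda>h. U h ^^ n)"
  shows "real n \<le> asymp_norm (contour_sum n t) * t"
proof -
  define q where "q = t ^ (2 * n - 1)"
  have q: "0 < q" using t by (simp add: q_def)
  have "n - 1 + n = 2 * n - 1" "Suc (2 * n - 1) = 2 * n" using n by simp_all
  then have "t ^ (n - 1) * t ^ n = q" "t ^ (2 * n) = t * q"
    by (simp_all add: q_def flip: power_add power_Suc)
  moreover have "(t ^ n)\<^sup>2 = t ^ (2 * n)" by (simp flip: power_mult add: mult.commute)
  ultimately have "real n * (2 * q) \<le> (asymp_norm (contour_sum n t) * t) * (2 * q)"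
    using asymp_norm_funpow_le_contour_sum[OF n t] unfolding tn[symmetric]
    by (simp add: mult_ac)
  then show ?thesis using q by simp
qed

lemma asymp_quasinilpotent_U: "asymp_quasinilpotent U"
  unfolding asymp_quasinilpotent_iff
proof (rule order_tendstoI)
  fix a :: real assume "a < 0"
  then show "\<forall>\<^sub>F n in sequentially. a < root n (asymp_norm (\<lambda>h. U h ^^ n))"
    by (intro always_eventually allI less_le_trans[OF \<open>a < 0\<close>] real_root_ge_zero asymp_norm_nonneg
        asymp_bounded_funpow asymp_bounded_U)
next
  fix \<rho> :: real assume \<rho>: "0 < \<rho>"
  define \<rho>' where "\<rho>' = asymp_norm U + 1"
  obtain M where "0 \<le> M" and M: "\<And>l. \<rho> \<le> cmod l \<Longrightarrow> cmod l \<le> \<rho>' \<Longrightarrow> asymp_norm (R l) \<le> M"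
    using resolvent_bounded_on_annulus[OF \<rho>] by blast
  define K where "K = pi * (\<rho>' * M\<^sup>2 + M)"
  show "\<forall>\<^sub>F n in sequentially. root n (asymp_norm (\<lambda>h. U h ^^ n)) < \<rho>"
    using eventually_ge_at_top[of "nat \<lceil>K * \<rho>'\<rceil> + 1"]
  proof eventually_elim
    case (elim n)
    then have n: "1 \<le> n" and large: "K * \<rho>' < real n" by linarith+
    define t where "t = root n (asymp_norm (\<lambda>h. U h ^^ n))"
    have p: "0 \<le> asymp_norm (\<lambda>h. U h ^^ n)" by (intro asymp_norm_nonneg asymp_bounded_funpow asymp_bounded_U)
    have "t < \<rho>'" using root_asymp_norm_funpow_le[OF asymp_bounded_U n] by (simp add: t_def \<rho>'_def)
    show "t < \<rho>"
    proof (rule ccontr)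
      assume "\<not> t < \<rho>"
      then have "\<rho> \<le> t" by simp
      have "t ^ n = asymp_norm (\<lambda>h. U h ^^ n)" using n p by (simp add: t_def real_root_pow_pos2)
      with n \<rho> \<open>\<rho> \<le> t\<close> have "real n \<le> asymp_norm (contour_sum n t) * t"
        by (intro real_le_asymp_norm_contour_sum) simp_all
      also have "\<dots> \<le> K * \<rho>'"
        using asymp_norm_contour_sum_le[OF n \<rho> \<open>\<rho> \<le> t\<close> less_imp_le[OF \<open>t < \<rho>'\<close>] M]
          \<rho> \<open>\<rho> \<le> t\<close> \<open>t < \<rho>'\<close> \<open>0 \<le> M\<close> asymp_norm_nonneg[OF asymp_bounded_U]
        by (intro mult_mono) (simp_all add: K_def \<rho>'_def)
      finally show False using large by simp
    qed
  qed
qed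

end

lemma asymp_quasinilpotent_if_spectrum_subset:
  fixes U :: "real \<Rightarrow> 'a::complex_normed_vector \<Rightarrow> 'a"
  assumes U: "Cb U" and sp: "asymp_spectrum U \<subseteq> {0}"
  shows "asymp_quasinilpotent U"
proof -
  have "\<forall>l. \<exists>R. l \<noteq> 0 \<longrightarrow> Cb R \<and>
      ((\<lambda>h. onorm (\<lambda>x. l *\<^sub>C R h x - U h (R h x) - x)) \<longlongrightarrow> 0) (at_right 0) \<and>
      ((\<lambda>h. onorm (\<lambda>x. R h (l *\<^sub>C x - U h x) - x)) \<longlongrightarrow> 0) (at_right 0)"
    (is "\<forall>l. \<exists>R. ?resolvent l R")
  proof
    fix l
    have "l \<noteq> 0 \<Longrightarrow> l \<in> asymp_resolvent_set U" using sp unfolding asymp_spectrum_def by blast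
    then show "\<exists>R. ?resolvent l R" unfolding asymp_resolvent_set_def by (cases "l = 0") auto
  qed
  then obtain R where "\<forall>l. ?resolvent l (R l)" by (rule exE[OF choice])
  with U interpret asymp_resolvent_family U R by unfold_locales simp_all
  show ?thesis by (rule asymp_quasinilpotent_U)
qed

theorem theorem29:
  fixes U :: "real \<Rightarrow> 'a::complex_banach \<Rightarrow> 'a"
  assumes "\<exists>x::'a. x \<noteq> 0"
    and "Cb U"
  shows "asymp_quasinilpotent U \<longleftrightarrow> asymp_spectrum U = {0}"
proof
  assume "asymp_quasinilpotent U"
  moreover obtain x0 :: 'a where "x0 \<noteq> 0" using assms(1) by blast
  ultimately show "asymp_spectrum U = {0}"
    using assms(2) by (intro asymp_spectrum_eq_0_if_quasinilpotent)
next
  assume "asymp_spectrum U = {0}"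
  with assms(2) show "asymp_quasinilpotent U"
    by (intro asymp_quasinilpotent_if_spectrum_subset) simp_all
qed

end
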